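(* Let $W(\mathbf{Q})$ be the Witt group of nonsingular symmetric bilinear forms over $\mathbf{Q}$. For every $w \in W(\mathbf{Q})$, $\rho(4w) = 4|\sigma(w)|$, where $\sigma$ denotes the signature.
   Context: For a class $w$ in a Witt group, the rank $\rho(w)$ is the minimum dimension of a square (symmetric/hermitian) matrix representing $w$. The signature $\sigma(w)$ is the signature of any real symmetric matrix representing $w$ (it is a Witt invariant). *)

theory Defs
  imports "Jordan_Normal_Form.Char_Poly"
begin

text \<open>Symmetric bilinear forms over Q are represented by their Gram matrices (rat mat).\<close>

definition nonsing_sym :: "rat mat \<Rightarrow> bool" where
  "nonsing_sym A \<longleftrightarrow> A \<in> carrier_mat (dim_row A) (dim_row A) \<and>
     transpose_mat A = A \<and> det A \<noteq> 0"

definition orth_sum :: "rat mat \<Rightarrow> rat mat \<Rightarrow> rat mat" where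
  "orth_sum A B = four_block_mat A (0\<^sub>m (dim_row A) (dim_col B)) (0\<^sub>m (dim_row B) (dim_col A)) B"

text \<open>Orthogonal sum of k hyperbolic planes [[0,1],[1,0]].\<close>
definition hyp :: "nat \<Rightarrow> rat mat" where
  "hyp k = mat (2*k) (2*k) (\<lambda>(i,j). if i div 2 = j div 2 \<and> i \<noteq> j then 1 else 0)"

definition isometric :: "rat mat \<Rightarrow> rat mat \<Rightarrow> bool" where
  "isometric A B \<longleftrightarrow> (\<exists>n P. A \<in> carrier_mat n n \<and> B \<in> carrier_mat n n \<and>
      P \<in> carrier_mat n n \<and> det P \<noteq> 0 \<and> transpose_mat P * A * P = B)"

text \<open>Witt equivalence: A + kH isometric to B + lH.  Witt classes are the
  equivalence classes of nonsingular symmetric forms under this relation.\<close>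
definition witt_equiv :: "rat mat \<Rightarrow> rat mat \<Rightarrow> bool" where
  "witt_equiv A B \<longleftrightarrow> (\<exists>k l. isometric (orth_sum A (hyp k)) (orth_sum B (hyp l)))"

definition witt_rank :: "rat mat \<Rightarrow> nat" where
  "witt_rank A = (LEAST n. \<exists>B. B \<in> carrier_mat n n \<and> nonsing_sym B \<and> witt_equiv B A)"

definition signature :: "rat mat \<Rightarrow> int" where
  "signature A = (let p = char_poly (map_mat real_of_rat A) in
     int (\<Sum>x\<in>{x. x > 0 \<and> poly p x = 0}. order x p) -
     int (\<Sum>x\<in>{x. x < 0 \<and> poly p x = 0}. order x p))"

end

theory Submission
  imports Defs
begin

text \<open>
  Over \<open>\<rat>\<close> every nonsingular symmetric form diagonalises, \<open>A \<cong> \<langle>d\<^sub>1, \<dots>, d\<^sub>n\<rangle>\<close>.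
  By Lagrange's four-square theorem \<open>\<bar>d\<bar>\<close> is a sum of four rational squares, and the matrix of
  left multiplication by the corresponding quaternion shows \<open>\<langle>d, d, d, d\<rangle> \<cong> 4\<langle>sgn d\<rangle>\<close>.
  Hence \<open>4A \<cong> 4p\<langle>1\<rangle> \<perp> 4q\<langle>-1\<rangle>\<close>, where \<open>p\<close> and \<open>q\<close> count the positive and negative \<open>d\<^sub>i\<close>;
  cancelling pairs \<open>\<langle>1, -1\<rangle>\<close> into hyperbolic planes shows that \<open>4A\<close> is Witt equivalent to a
  form of dimension \<open>4\<bar>p - q\<bar>\<close>. Conversely, by Sylvester's law of inertia every form Witt
  equivalent to \<open>4A\<close> has at least \<open>4\<bar>p - q\<bar>\<close> positive or negative diagonal entries.
  Finally, the spectral theorem for real symmetric matrices identifies \<open>p - q\<close> with the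
  signature, which is defined through the eigenvalues.
\<close>

section \<open>Diagonal matrices and orthogonal sums\<close>

definition diag_of_list :: "'a::zero list \<Rightarrow> 'a mat" where
  "diag_of_list xs = mat (length xs) (length xs) (\<lambda>(i,j). if i = j then xs ! i else 0)"

lemma carrier_diag_of_list[simp]: "diag_of_list xs \<in> carrier_mat (length xs) (length xs)"
  by (simp add: diag_of_list_def)

lemma dim_diag_of_list[simp]:
  "dim_row (diag_of_list xs) = length xs" "dim_col (diag_of_list xs) = length xs"
  by (simp_all add: diag_of_list_def)

lemma index_diag_of_list[simp]:
  "i < length xs \<Longrightarrow> j < length xs \<Longrightarrow> diag_of_list xs $$ (i,j) = (if i = j then xs ! i else 0)"
  by (simp add: diag_of_list_def)

lemma transpose_diag_of_list[simp]: "transpose_mat (diag_of_list xs) = diag_of_list xs"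
  by (rule eq_matI) auto

lemma diag_mat_diag_of_list[simp]: "diag_mat (diag_of_list xs) = xs"
  by (rule nth_equalityI) (auto simp: diag_mat_def)

lemma upper_triangular_diag_of_list: "upper_triangular (diag_of_list xs)"
  by (auto simp: upper_triangular_def)

lemma det_diag_of_list: "det (diag_of_list (xs :: 'a :: comm_ring_1 list)) = prod_list xs"
  using det_upper_triangular[OF upper_triangular_diag_of_list carrier_diag_of_list] by simp

lemma map_mat_diag_of_list: "f 0 = 0 \<Longrightarrow> map_mat f (diag_of_list xs) = diag_of_list (map f xs)"
  by (rule eq_matI) auto

lemma uminus_diag_of_list: "- diag_of_list xs = diag_of_list (map uminus (xs :: 'a :: ring_1 list))"
  by (rule eq_matI) auto

lemma diag_of_list_mult_vec_index:
  assumes "i < length (xs :: 'a :: comm_ring_1 list)" "dim_vec v = length xs"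
  shows "(diag_of_list xs *\<^sub>v v) $ i = xs ! i * v $ i"
proof -
  have "(diag_of_list xs *\<^sub>v v) $ i = (\<Sum>k<length xs. (if i = k then xs ! i else 0) * v $ k)"
    using assms by (simp add: scalar_prod_def atLeast0LessThan)
  also have "\<dots> = (\<Sum>k<length xs. if k = i then xs ! i * v $ i else 0)"
    by (rule sum.cong) auto
  also have "\<dots> = xs ! i * v $ i" using assms by simp
  finally show ?thesis .
qed

lemma diag_of_list_quadratic_form:
  assumes "dim_vec v = length (xs :: 'a :: comm_ring_1 list)"
  shows "v \<bullet> (diag_of_list xs *\<^sub>v v) = (\<Sum>i<length xs. xs ! i * (v $ i * v $ i))"
proof -
  have "v \<bullet> (diag_of_list xs *\<^sub>v v) = (\<Sum>i<length xs. v $ i * (diag_of_list xs *\<^sub>v v) $ i)"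
    by (simp only: scalar_prod_def dim_mult_mat_vec dim_diag_of_list atLeast0LessThan)
  also have "\<dots> = (\<Sum>i<length xs. xs ! i * (v $ i * v $ i))"
    using assms by (intro sum.cong refl) (subst diag_of_list_mult_vec_index, auto)
  finally show ?thesis .
qed

definition block_diag :: "'a::zero mat \<Rightarrow> 'a mat \<Rightarrow> 'a mat" where
  "block_diag A B = four_block_mat A (0\<^sub>m (dim_row A) (dim_col B)) (0\<^sub>m (dim_row B) (dim_col A)) B"

lemma orth_sum_eq_block_diag: "orth_sum = block_diag"
  by (auto simp: fun_eq_iff orth_sum_def block_diag_def)

lemma carrier_block_diag[simp]:
  "A \<in> carrier_mat n n \<Longrightarrow> B \<in> carrier_mat m m \<Longrightarrow> block_diag A B \<in> carrier_mat (n+m) (n+m)"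
  by (auto simp: block_diag_def)

lemma block_diag_diag_of_list: "block_diag (diag_of_list xs) (diag_of_list ys) = diag_of_list (xs @ ys)"
  by (rule eq_matI) (auto simp: block_diag_def index_mat_four_block nth_append)

lemma block_diag_empty_right: "A \<in> carrier_mat n n \<Longrightarrow> B \<in> carrier_mat 0 0 \<Longrightarrow> block_diag A B = A"
  by (rule eq_matI) (auto simp: block_diag_def index_mat_four_block)

lemma block_diag_one: "block_diag (1\<^sub>m n) (1\<^sub>m m) = (1\<^sub>m (n + m) :: 'a :: zero_neq_one mat)"
  by (rule eq_matI) (auto simp: block_diag_def index_mat_four_block)

lemma block_diag_mult:
  assumes "A \<in> carrier_mat n n" "B \<in> carrier_mat m m" "C \<in> carrier_mat n n" "D \<in> carrier_mat m m"
  shows "block_diag A B * block_diag C D = block_diag (A * C) (B * (D :: 'a :: semiring_1 mat))"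
  using assms unfolding block_diag_def
  by (subst mult_four_block_mat[of _ n n _ m _ m _ _ n _ m]) auto

lemma transpose_block_diag:
  assumes "A \<in> carrier_mat n n" "B \<in> carrier_mat m m"
  shows "transpose_mat (block_diag A B) = block_diag (transpose_mat A) (transpose_mat (B :: 'a :: semiring_1 mat))"
  using assms unfolding block_diag_def
  by (subst transpose_four_block_mat[of _ n n _ m _ m]) auto

lemma det_block_diag:
  assumes "A \<in> carrier_mat n n" "B \<in> carrier_mat m m"
  shows "det (block_diag A B) = det A * det (B :: 'a :: idom mat)"
  using assms unfolding block_diag_def
  by (subst det_four_block_mat_lower_left_zero[of _ n _ m]) auto

lemma block_diag_congruence:
  assumes "A \<in> carrier_mat n n" "B \<in> carrier_mat m m" "P \<in> carrier_mat n n" "Q \<in> carrier_mat m m"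
  shows "transpose_mat (block_diag P Q) * block_diag A B * block_diag P Q
    = block_diag (transpose_mat P * A * P) (transpose_mat Q * B * (Q :: 'a :: semiring_1 mat))"
proof -
  have "transpose_mat (block_diag P Q) * block_diag A B
      = block_diag (transpose_mat P * A) (transpose_mat Q * B)"
    using assms by (simp add: transpose_block_diag block_diag_mult)
  then show ?thesis
    using assms by (simp add: block_diag_mult[of _ n _ m])
qed

section \<open>Congruence of matrices\<close>

definition congruent_mat :: "'a::field mat \<Rightarrow> 'a mat \<Rightarrow> bool" where
  "congruent_mat A B \<longleftrightarrow> (\<exists>n P. A \<in> carrier_mat n n \<and> B \<in> carrier_mat n n \<and>
      P \<in> carrier_mat n n \<and> det P \<noteq> 0 \<and> transpose_mat P * A * P = B)"

lemma isometric_eq_congruent_mat: "isometric = congruent_mat"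
  by (auto simp: fun_eq_iff isometric_def congruent_mat_def)

lemma index_congruence:
  assumes "P \<in> carrier_mat n n" "M \<in> carrier_mat n n" "i < n" "j < n"
  shows "(transpose_mat P * M * P) $$ (i,j) = col P i \<bullet> (M *\<^sub>v col P j)"
proof -
  have "transpose_mat P * M * P = transpose_mat P * (M * P)"
    using assms by (intro assoc_mult_mat[of _ n n _ n _ n]) auto
  also have "\<dots> $$ (i,j) = row (transpose_mat P) i \<bullet> col (M * P) j"
    using assms by (intro index_mult_mat(1)) auto
  also have "row (transpose_mat P) i = col P i" using assms by (intro row_transpose) auto
  also have "col (M * P) j = M *\<^sub>v col P j" using assms by (intro col_mult2) auto
  finally show ?thesis .
qed

lemma transpose_congruence_mult:
  assumes "A \<in> carrier_mat n n" "T \<in> carrier_mat n n" "W \<in> carrier_mat n n"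
  shows "transpose_mat (T * W) * A * (T * W) = transpose_mat W * (transpose_mat T * A * T) * (W :: 'a :: comm_ring_1 mat)"
  using assms by (simp add: transpose_mult[of _ n n _ n] assoc_mult_mat[of _ n n _ n _ n])

lemma symmetric_congruence:
  assumes "A \<in> carrier_mat n n" "T \<in> carrier_mat n n" "transpose_mat A = A"
  shows "transpose_mat (transpose_mat T * A * T) = transpose_mat T * A * (T :: 'a :: comm_ring_1 mat)"
proof -
  have "transpose_mat (transpose_mat T * A * T) = transpose_mat T * transpose_mat (transpose_mat T * A)"
    using assms by (intro transpose_mult[of _ n n _ n]) auto
  also have "transpose_mat (transpose_mat T * A) = transpose_mat A * T"
    using transpose_mult[of "transpose_mat T" n n A n] assms by simp
  finally show ?thesis using assms by (simp add: assoc_mult_mat[of _ n n _ n _ n])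
qed

lemma det_congruence:
  assumes "A \<in> carrier_mat n n" "P \<in> carrier_mat n n"
  shows "det (transpose_mat P * A * P) = det P * det A * det (P :: 'a :: comm_ring_1 mat)"
proof -
  have "det (transpose_mat P * A * P) = det (transpose_mat P * A) * det P"
    using assms by (intro det_mult[of _ n]) auto
  also have "det (transpose_mat P * A) = det (transpose_mat P) * det A"
    using assms by (intro det_mult[of _ n]) auto
  finally show ?thesis using assms(2) by (simp add: det_transpose)
qed

lemma congruent_mat_refl: "A \<in> carrier_mat n n \<Longrightarrow> congruent_mat A A"
  unfolding congruent_mat_def by (intro exI[of _ n] exI[of _ "1\<^sub>m n"]) auto

lemma congruent_mat_trans[trans]:
  assumes "congruent_mat A B" "congruent_mat B C"
  shows "congruent_mat A C"
proof -
  from assms(1) obtain n P where P: "A \<in> carrier_mat n n" "B \<in> carrier_mat n n"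
      "P \<in> carrier_mat n n" "det P \<noteq> 0" "transpose_mat P * A * P = B"
    unfolding congruent_mat_def by auto
  from assms(2) obtain Q where Q: "C \<in> carrier_mat n n"
      "Q \<in> carrier_mat n n" "det Q \<noteq> 0" "transpose_mat Q * B * Q = C"
    unfolding congruent_mat_def using P(2) by auto
  have "transpose_mat (P * Q) * A * (P * Q) = C"
    using P(1,3,5) Q(2,4) by (simp add: transpose_congruence_mult[of _ n])
  moreover have "det (P * Q) \<noteq> 0" using P(3,4) Q(2,3) by (simp add: det_mult)
  moreover have "P * Q \<in> carrier_mat n n" using P(3) Q(2) by simp
  ultimately show ?thesis unfolding congruent_mat_def using P(1) Q(1) by blast
qed

lemma congruent_mat_sym:
  assumes "congruent_mat A B"
  shows "congruent_mat B A"
proof -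
  from assms obtain n P where P: "A \<in> carrier_mat n n" "B \<in> carrier_mat n n"
      "P \<in> carrier_mat n n" "det P \<noteq> 0" "transpose_mat P * A * P = B"
    unfolding congruent_mat_def by auto
  have "P \<in> Units (ring_mat TYPE('a) n undefined)" by (rule det_non_zero_imp_unit[OF P(3,4)])
  then obtain R where R: "R \<in> carrier_mat n n" "P * R = 1\<^sub>m n" "R * P = 1\<^sub>m n"
    unfolding Units_def ring_mat_def by auto
  have RP: "transpose_mat R * transpose_mat P = 1\<^sub>m n"
    using R P(3) by (metis transpose_mult transpose_one)
  have "transpose_mat R * B * R = (transpose_mat R * transpose_mat P) * A * (P * R)"
    unfolding P(5)[symmetric] using P(1-4) R by (simp add: assoc_mult_mat[of _ n n _ n _ n])
  also have "\<dots> = A" using R RP P(1) by simp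
  finally have "transpose_mat R * B * R = A" .
  moreover have "det R \<noteq> 0"
    using arg_cong[OF R(2), of det] P(3) R(1) by (auto simp: det_mult)
  ultimately show ?thesis unfolding congruent_mat_def using P R by blast
qed

lemma congruent_matI:
  assumes "A \<in> carrier_mat n n" "P \<in> carrier_mat n n" "transpose_mat P * A * P = B" "det B \<noteq> 0"
  shows "congruent_mat A B"
proof -
  have "det P \<noteq> 0" using det_congruence[OF assms(1,2)] assms(3,4) by auto
  moreover have "B \<in> carrier_mat n n" using assms(1-3) by auto
  ultimately show ?thesis unfolding congruent_mat_def using assms(1-3) by blast
qed

lemma congruent_mat_det_nonzero:
  assumes "congruent_mat A B" "det A \<noteq> 0"
  shows "det B \<noteq> 0"
proof -
  from assms(1) obtain n P where P: "A \<in> carrier_mat n n" "P \<in> carrier_mat n n"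
    "det P \<noteq> 0" "transpose_mat P * A * P = B"
    unfolding congruent_mat_def by auto
  have "det B = det P * det A * det P" unfolding P(4)[symmetric] by (rule det_congruence[OF P(1,2)])
  then show ?thesis using P(3) assms(2) by simp
qed

lemma congruent_mat_block_diag:
  assumes "congruent_mat A A'" "congruent_mat B B'"
  shows "congruent_mat (block_diag A B) (block_diag A' B')"
proof -
  from assms(1) obtain n P where P: "A \<in> carrier_mat n n" "A' \<in> carrier_mat n n"
      "P \<in> carrier_mat n n" "det P \<noteq> 0" "transpose_mat P * A * P = A'"
    unfolding congruent_mat_def by auto
  from assms(2) obtain m Q where Q: "B \<in> carrier_mat m m" "B' \<in> carrier_mat m m"
      "Q \<in> carrier_mat m m" "det Q \<noteq> 0" "transpose_mat Q * B * Q = B'"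
    unfolding congruent_mat_def by auto
  have "transpose_mat (block_diag P Q) * block_diag A B * block_diag P Q = block_diag A' B'"
    using block_diag_congruence[OF P(1) Q(1) P(3) Q(3)] P(5) Q(5) by simp
  moreover have "det (block_diag P Q) \<noteq> 0" using det_block_diag[OF P(3) Q(3)] P(4) Q(4) by simp
  ultimately show ?thesis unfolding congruent_mat_def using P Q
    by (meson carrier_block_diag)
qed

lemma congruent_mat_uminus:
  assumes "congruent_mat A B"
  shows "congruent_mat (- A) (- B)"
proof -
  from assms obtain n P where P: "A \<in> carrier_mat n n" "B \<in> carrier_mat n n"
      "P \<in> carrier_mat n n" "det P \<noteq> 0" "transpose_mat P * A * P = B"
    unfolding congruent_mat_def by auto
  have "transpose_mat P * (- A) * P = - B"
    unfolding P(5)[symmetric] using P(1,3) by (simp add: uminus_mult_right_mat uminus_mult_left_mat)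
  then show ?thesis unfolding congruent_mat_def using P(1-4) by (intro exI[of _ n] exI[of _ P]) auto
qed

lemma congruent_mat_map_of_rat:
  assumes "congruent_mat A B"
  shows "congruent_mat (map_mat (of_rat :: rat \<Rightarrow> 'a :: field_char_0) A) (map_mat of_rat B)"
proof -
  from assms obtain n P where P: "A \<in> carrier_mat n n" "B \<in> carrier_mat n n"
      "P \<in> carrier_mat n n" "det P \<noteq> 0" "transpose_mat P * A * P = B"
    unfolding congruent_mat_def by auto
  have "transpose_mat (map_mat of_rat P) * map_mat of_rat A * map_mat of_rat P
      = (map_mat (of_rat :: rat \<Rightarrow> 'a) B)"
    unfolding P(5)[symmetric] using P(1,3)
    by (simp add: of_rat_hom.mat_hom_mult[of _ n n _ n] map_mat_transpose)
  moreover have "det (map_mat (of_rat :: rat \<Rightarrow> 'a) P) \<noteq> 0" using P(4) by (simp add: of_rat_hom.hom_det)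
  ultimately show ?thesis unfolding congruent_mat_def using P(1-3)
    by (intro exI[of _ n] exI[of _ "map_mat of_rat P"]) auto
qed

lemma orthogonal_det_nonzero:
  assumes "P \<in> carrier_mat n n" "transpose_mat P * P = 1\<^sub>m n"
  shows "det (P :: 'a :: field mat) \<noteq> 0"
proof -
  have "det (transpose_mat P * P) = det (transpose_mat P) * det P"
    using assms by (intro det_mult) auto
  then have "det P * det P = 1" using assms by (simp add: det_transpose)
  then show ?thesis by auto
qed

lemma mult_mat_vec_unit_vec:
  assumes "(M :: 'a :: comm_ring_1 mat) \<in> carrier_mat n m" "j < m"
  shows "M *\<^sub>v unit_vec m j = col M j"
  by (rule eq_vecI) (use assms in \<open>auto simp: scalar_prod_right_unit\<close>)

lemma permutation_congruence:
  assumes p: "p permutes {..<length xs}"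
  defines "P \<equiv> mat (length xs) (length xs) (\<lambda>(i,j). if i = p j then 1 else (0 :: 'a :: comm_ring_1))"
  shows "transpose_mat P * diag_of_list xs * P = diag_of_list (permute_list p xs)"
proof (rule eq_matI)
  let ?n = "length xs"
  have P: "P \<in> carrier_mat ?n ?n" unfolding P_def by simp
  have p_lt: "j < ?n \<Longrightarrow> p j < ?n" for j using permutes_in_image[OF p] by auto
  have col_P: "j < ?n \<Longrightarrow> col P j = unit_vec ?n (p j)" for j
    by (rule eq_vecI) (auto simp: P_def unit_vec_def p_lt)
  fix i j assume "i < dim_row (diag_of_list (permute_list p xs))" "j < dim_col (diag_of_list (permute_list p xs))"
  then have i: "i < ?n" and j: "j < ?n" by auto
  have "(transpose_mat P * diag_of_list xs * P) $$ (i,j) = unit_vec ?n (p i) \<bullet> col (diag_of_list xs) (p j)"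
    using index_congruence[OF P carrier_diag_of_list i j] col_P[OF i] col_P[OF j] p_lt[OF j]
    by (simp add: mult_mat_vec_unit_vec[of _ ?n])
  also have "\<dots> = (if i = j then xs ! p i else 0)"
    using p_lt[OF i] p_lt[OF j] by (simp add: scalar_prod_left_unit inj_eq[OF permutes_inj[OF p]])
  finally show "(transpose_mat P * diag_of_list xs * P) $$ (i,j) = diag_of_list (permute_list p xs) $$ (i,j)"
    using i j by (simp add: permute_list_nth[OF p])
qed (simp_all add: P_def)

lemma congruent_mat_diag_of_list_perm:
  assumes "mset xs = mset (ys :: 'a :: field list)"
  shows "congruent_mat (diag_of_list xs) (diag_of_list ys)"
proof -
  from mset_eq_permutation[OF assms[symmetric]] obtain p
    where p: "p permutes {..<length xs}" and ys: "permute_list p xs = ys" by metis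
  define P where "P \<equiv> mat (length xs) (length xs) (\<lambda>(i,j). if i = p j then 1 else (0 :: 'a))"
  have P: "P \<in> carrier_mat (length xs) (length xs)" unfolding P_def by simp
  let ?ones = "replicate (length xs) (1 :: 'a)"
  have p_ones: "p permutes {..<length ?ones}" using p by simp
  have ones: "diag_of_list ?ones = 1\<^sub>m (length xs)" by (rule eq_matI) auto
  have "transpose_mat P * diag_of_list ?ones * P = diag_of_list (permute_list p ?ones)"
    using permutation_congruence[OF p_ones] unfolding P_def by simp
  also have "permute_list p ?ones = ?ones"
    using permutes_in_image[OF p] by (intro nth_equalityI) (auto simp: permute_list_nth[OF p_ones])
  finally have "transpose_mat P * P = 1\<^sub>m (length xs)"
    unfolding ones using P by simp
  then have "det P \<noteq> 0" by (rule orthogonal_det_nonzero[OF P])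
  moreover have "transpose_mat P * diag_of_list xs * P = diag_of_list ys"
    using permutation_congruence[OF p] unfolding P_def ys by simp
  ultimately show ?thesis unfolding congruent_mat_def using P assms
    by (intro exI[of _ "length xs"] exI[of _ P]) (auto dest: mset_eq_length)
qed

section \<open>Diagonalisation of symmetric matrices\<close>

definition lower_right_block :: "'a mat \<Rightarrow> 'a mat" where
  "lower_right_block M = mat (dim_row M - 1) (dim_row M - 1) (\<lambda>(i,j). M $$ (Suc i, Suc j))"

lemma symmetric_index:
  "transpose_mat M = M \<Longrightarrow> M \<in> carrier_mat n n \<Longrightarrow> i < n \<Longrightarrow> j < n \<Longrightarrow> M $$ (j,i) = M $$ (i,j)"
  by (metis index_transpose_mat(1) carrier_matD)

lemma block_diag_lower_right_block:
  assumes M: "M \<in> carrier_mat (Suc n) (Suc n)" and sym: "transpose_mat M = M"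
    and col0: "\<And>i. 0 < i \<Longrightarrow> i < Suc n \<Longrightarrow> M $$ (i,0) = (0 :: 'a :: comm_ring_1)"
  shows "M = block_diag (diag_of_list [M $$ (0,0)]) (lower_right_block M)"
    and "transpose_mat (lower_right_block M) = lower_right_block M"
    and "lower_right_block M \<in> carrier_mat n n"
proof -
  note sy = symmetric_index[OF sym M]
  show "lower_right_block M \<in> carrier_mat n n" unfolding lower_right_block_def using M by simp
  show "transpose_mat (lower_right_block M) = lower_right_block M"
    by (rule eq_matI) (use M sy in \<open>auto simp: lower_right_block_def\<close>)
  show "M = block_diag (diag_of_list [M $$ (0,0)]) (lower_right_block M)"
  proof (rule eq_matI)
    fix i j assume "i < dim_row (block_diag (diag_of_list [M $$ (0,0)]) (lower_right_block M))"
      "j < dim_col (block_diag (diag_of_list [M $$ (0,0)]) (lower_right_block M))"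
    then have i: "i < Suc n" and j: "j < Suc n" using M
      by (auto simp: block_diag_def lower_right_block_def)
    consider "i = 0" "j = 0" | "i = 0" "j > 0" | "i > 0" "j = 0" | "i > 0" "j > 0" by blast
    then show "M $$ (i,j) = block_diag (diag_of_list [M $$ (0,0)]) (lower_right_block M) $$ (i,j)"
    proof cases
      case 2 then show ?thesis using col0[OF _ j] sy[OF i j] i j M
        by (auto simp: block_diag_def lower_right_block_def index_mat_four_block)
    next
      case 4
      then obtain i' j' where "i = Suc i'" "j = Suc j'" by (metis gr0_implies_Suc)
      then show ?thesis using i j M by (auto simp: block_diag_def lower_right_block_def index_mat_four_block)
    qed (use col0 i j M in \<open>auto simp: block_diag_def lower_right_block_def index_mat_four_block\<close>)
  qed (use M in \<open>auto simp: block_diag_def lower_right_block_def\<close>)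
qed

lemma congruence_clears_first_column:
  assumes M: "M \<in> carrier_mat N N" and sym: "transpose_mat M = M"
    and m0: "M $$ (0,0) \<noteq> (0 :: 'a :: field)" and N: "0 < N"
  shows "\<exists>W. W \<in> carrier_mat N N \<and> det W \<noteq> 0 \<and>
    (\<forall>i. 0 < i \<longrightarrow> i < N \<longrightarrow> (transpose_mat W * M * W) $$ (i,0) = 0)"
proof -
  define r where "r k = - M $$ (0,k) / M $$ (0,0)" for k
  define W where "W = mat N N (\<lambda>(i,k). if i = k then 1 else if i = 0 then r k else (0 :: 'a))"
  have W: "W \<in> carrier_mat N N" unfolding W_def by simp
  have "det W = prod_list (diag_mat W)"
    by (rule det_upper_triangular[OF _ W]) (auto simp: upper_triangular_def W_def)
  also have "diag_mat W = replicate N 1" by (rule nth_equalityI) (auto simp: diag_mat_def W_def)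
  finally have "det W = 1" by simp
  moreover have "(transpose_mat W * M * W) $$ (i,0) = 0" if i: "0 < i" "i < N" for i
  proof -
    have col_M: "col M 0 \<in> carrier_vec N" using M by (simp add: carrier_vecI)
    have "col W 0 = unit_vec N 0" by (rule eq_vecI) (auto simp: W_def N)
    then have "(transpose_mat W * M * W) $$ (i,0) = col W i \<bullet> col M 0"
      using index_congruence[OF W M i(2) N] mult_mat_vec_unit_vec[OF M N] by simp
    also have "col W i = unit_vec N i + r i \<cdot>\<^sub>v unit_vec N 0"
      by (rule eq_vecI) (use i in \<open>auto simp: W_def\<close>)
    also have "(unit_vec N i + r i \<cdot>\<^sub>v unit_vec N 0) \<bullet> col M 0 = M $$ (i,0) + r i * M $$ (0,0)"
      using i N M by (simp add: add_scalar_prod_distrib[OF _ _ col_M] scalar_prod_left_unit[OF col_M])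
    also have "\<dots> = 0" unfolding r_def using m0 symmetric_index[OF sym M i(2) N] by simp
    finally show ?thesis .
  qed
  ultimately show ?thesis using W by (intro exI[of _ W]) auto
qed

lemma congruence_nonzero_corner:
  assumes A: "A \<in> carrier_mat N N" and sym: "transpose_mat A = A"
    and j: "j < N" "j \<noteq> 0" and aj: "A $$ (j,0) \<noteq> (0 :: 'a :: field_char_0)"
  shows "\<exists>T. T \<in> carrier_mat N N \<and> det T \<noteq> 0 \<and> (transpose_mat T * A * T) $$ (0,0) \<noteq> 0"
proof (cases "A $$ (0,0) = 0")
  case False
  then show ?thesis using A by (intro exI[of _ "1\<^sub>m N"]) auto
next
  case a00: True
  have N: "0 < N" using j by auto
  define T where "T t = mat N N (\<lambda>(i,k). if i = k then 1 else if i = j \<and> k = 0 then t else (0 :: 'a))" for t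
  have T: "T t \<in> carrier_mat N N" for t unfolding T_def by simp
  have det_T: "det (T t) = 1" for t
  proof -
    have "det (T t) = prod_list (diag_mat (T t))"
      by (rule det_lower_triangular[OF _ T]) (use j in \<open>auto simp: T_def\<close>)
    also have "diag_mat (T t) = replicate N 1" by (rule nth_equalityI) (auto simp: diag_mat_def T_def)
    finally show ?thesis by simp
  qed
  have corner: "(transpose_mat (T t) * A * T t) $$ (0,0) = 2 * t * A $$ (j,0) + t * t * A $$ (j,j)" for t
  proof -
    have col_T: "col (T t) 0 = unit_vec N 0 + t \<cdot>\<^sub>v unit_vec N j"
      by (rule eq_vecI) (use j in \<open>auto simp: T_def\<close>)
    have c0: "col A 0 \<in> carrier_vec N" and cj: "col A j \<in> carrier_vec N" using A by (auto simp: carrier_vecI)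
    have "A *\<^sub>v col (T t) 0 = col A 0 + t \<cdot>\<^sub>v col A j"
      unfolding col_T using A j N
      by (simp add: mult_add_distrib_mat_vec[OF A] mult_mat_vec[OF A] mult_mat_vec_unit_vec)
    then have "(transpose_mat (T t) * A * T t) $$ (0,0)
        = (unit_vec N 0 + t \<cdot>\<^sub>v unit_vec N j) \<bullet> (col A 0 + t \<cdot>\<^sub>v col A j)"
      using index_congruence[OF T A N N] col_T by simp
    also have "\<dots> = (unit_vec N 0 \<bullet> col A 0 + t * (unit_vec N 0 \<bullet> col A j))
        + t * (unit_vec N j \<bullet> col A 0 + t * (unit_vec N j \<bullet> col A j))"
      using c0 cj by (simp add: add_scalar_prod_distrib[of _ N] scalar_prod_add_distrib[of _ N]
          smult_scalar_prod_distrib[of _ N] scalar_prod_smult_distrib[of _ N] algebra_simps)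
    also have "\<dots> = A $$ (0,0) + t * A $$ (0,j) + t * (A $$ (j,0) + t * A $$ (j,j))"
      using A j N by (simp add: scalar_prod_left_unit[OF c0] scalar_prod_left_unit[OF cj])
    finally show ?thesis using a00 symmetric_index[OF sym A N j(1)] by (simp add: algebra_simps)
  qed
  \<comment> \<open>The values at \<open>t = 1\<close> and \<open>t = -1\<close> differ by \<open>4 A\<^sub>j\<^sub>0 \<noteq> 0\<close>, so one of them is nonzero.\<close>
  have "2 * 1 * A $$ (j,0) + 1 * 1 * A $$ (j,j) \<noteq> 0 \<or> 2 * (-1) * A $$ (j,0) + (-1) * (-1) * A $$ (j,j) \<noteq> 0"
    using aj by auto
  then show ?thesis using corner T det_T by (metis one_neq_zero)
qed

lemma congruence_first_column_zero:
  assumes A: "A \<in> carrier_mat (Suc n) (Suc n)" and sym: "transpose_mat A = A"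
  shows "\<exists>W. W \<in> carrier_mat (Suc n) (Suc n) \<and> det W \<noteq> 0 \<and>
    (\<forall>i. 0 < i \<longrightarrow> i < Suc n \<longrightarrow> (transpose_mat W * A * W) $$ (i,0) = (0 :: 'a :: field_char_0))"
proof (cases "\<exists>j. 0 < j \<and> j < Suc n \<and> A $$ (j,0) \<noteq> 0")
  case False
  then show ?thesis using A by (intro exI[of _ "1\<^sub>m (Suc n)"]) auto
next
  case True
  then obtain j where j: "j < Suc n" "j \<noteq> 0" "A $$ (j,0) \<noteq> 0" by auto
  from congruence_nonzero_corner[OF A sym j] obtain T where T: "T \<in> carrier_mat (Suc n) (Suc n)"
    "det T \<noteq> 0" "(transpose_mat T * A * T) $$ (0,0) \<noteq> 0" by auto
  let ?M = "transpose_mat T * A * T"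
  have M: "?M \<in> carrier_mat (Suc n) (Suc n)" using A T by auto
  from congruence_clears_first_column[OF M symmetric_congruence[OF A T(1) sym] T(3)]
  obtain W where W: "W \<in> carrier_mat (Suc n) (Suc n)" "det W \<noteq> 0"
    "\<forall>i. 0 < i \<longrightarrow> i < Suc n \<longrightarrow> (transpose_mat W * ?M * W) $$ (i,0) = 0" by auto
  have "det (T * W) \<noteq> 0" using T W by (simp add: det_mult[of _ "Suc n"])
  then show ?thesis using W(3) T(1) W(1) transpose_congruence_mult[OF A T(1) W(1)]
    by (intro exI[of _ "T * W"]) simp
qed

theorem symmetric_congruent_diag:
  assumes "A \<in> carrier_mat n n" "transpose_mat A = A"
  shows "\<exists>xs. length xs = n \<and> congruent_mat A (diag_of_list (xs :: 'a :: field_char_0 list))"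
  using assms
proof (induction n arbitrary: A)
  case 0
  then have "A = diag_of_list []" by (intro eq_matI) auto
  then show ?case using congruent_mat_refl[OF "0.prems"(1)] by auto
next
  case (Suc n A)
  from congruence_first_column_zero[OF Suc.prems] obtain W where W: "W \<in> carrier_mat (Suc n) (Suc n)"
    "det W \<noteq> 0" "\<forall>i. 0 < i \<longrightarrow> i < Suc n \<longrightarrow> (transpose_mat W * A * W) $$ (i,0) = 0" by auto
  let ?M = "transpose_mat W * A * W"
  have M: "?M \<in> carrier_mat (Suc n) (Suc n)" using Suc.prems(1) W by auto
  have "?M $$ (i,0) = 0" if "0 < i" "i < Suc n" for i using W(3) that by blast
  note split = block_diag_lower_right_block[OF M symmetric_congruence[OF Suc.prems(1) W(1) Suc.prems(2)] this]
  from Suc.IH[OF split(3,2)] obtain ys where ys: "length ys = n"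
    "congruent_mat (lower_right_block ?M) (diag_of_list ys)" by auto
  have "congruent_mat A ?M" unfolding congruent_mat_def using Suc.prems(1) M W by blast
  also note split(1)
  finally have "congruent_mat A (block_diag (diag_of_list [?M $$ (0,0)]) (diag_of_list ys))"
    using congruent_mat_trans congruent_mat_block_diag[OF congruent_mat_refl[OF carrier_diag_of_list] ys(2)]
    by blast
  then show ?case using ys(1) unfolding block_diag_diag_of_list by (intro exI[of _ "?M $$ (0,0) # ys"]) auto
qed

lemma nonsing_sym_congruent_diag:
  assumes "nonsing_sym A"
  shows "\<exists>ds. length ds = dim_row A \<and> congruent_mat A (diag_of_list ds) \<and> 0 \<notin> set ds"
proof -
  from assms have A: "A \<in> carrier_mat (dim_row A) (dim_row A)" "transpose_mat A = A" "det A \<noteq> 0"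
    unfolding nonsing_sym_def by auto
  from symmetric_congruent_diag[OF A(1,2)] obtain ds
    where ds: "length ds = dim_row A" "congruent_mat A (diag_of_list ds)" by auto
  have "det (diag_of_list ds) \<noteq> 0" by (rule congruent_mat_det_nonzero[OF ds(2) A(3)])
  then have "0 \<notin> set ds" by (auto simp: det_diag_of_list prod_list_zero_iff)
  then show ?thesis using ds by blast
qed

section \<open>Sylvester's law of inertia\<close>

definition num_pos :: "'a :: linordered_idom list \<Rightarrow> nat" where
  "num_pos xs = length (filter (\<lambda>x. 0 < x) xs)"

definition num_neg :: "'a :: linordered_idom list \<Rightarrow> nat" where
  "num_neg xs = length (filter (\<lambda>x. x < 0) xs)"

lemma num_pos_append[simp]: "num_pos (xs @ ys) = num_pos xs + num_pos ys"
  by (simp add: num_pos_def)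

lemma num_neg_append[simp]: "num_neg (xs @ ys) = num_neg xs + num_neg ys"
  by (simp add: num_neg_def)

lemma num_neg_eq_num_pos_uminus: "num_neg xs = num_pos (map uminus xs)"
  unfolding num_neg_def num_pos_def by (induction xs) auto

lemma num_pos_plus_num_neg_le: "num_pos xs + num_neg xs \<le> length xs"
  unfolding num_pos_def num_neg_def by (induction xs) auto

lemma num_pos_map_of_rat[simp]: "num_pos (map (of_rat :: rat \<Rightarrow> 'a :: linordered_field) xs) = num_pos xs"
  unfolding num_pos_def by (induction xs) auto

lemma num_neg_map_of_rat[simp]: "num_neg (map (of_rat :: rat \<Rightarrow> 'a :: linordered_field) xs) = num_neg xs"
  unfolding num_neg_def by (induction xs) auto

lemma exists_nonzero_orthogonal_vec:
  assumes L: "set L \<subseteq> carrier_vec n" and len: "length L < n"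
  shows "\<exists>z. z \<in> carrier_vec n \<and> z \<noteq> 0\<^sub>v n \<and> (\<forall>v \<in> set L. v \<bullet> z = (0 :: 'a :: field))"
proof -
  define rs where "rs = L @ replicate (n - length L) (0\<^sub>v n)"
  define M where "M = mat_of_rows n rs"
  have len_rs: "length rs = n" unfolding rs_def using len by simp
  have rs: "set rs \<subseteq> carrier_vec n" unfolding rs_def using L by auto
  have M: "M \<in> carrier_mat n n" unfolding M_def using len_rs by (metis mat_of_rows_carrier(1))
  have row_M: "i < n \<Longrightarrow> row M i = rs ! i" for i
    unfolding M_def using len_rs rs by (intro mat_of_rows_row) auto
  \<comment> \<open>The padding makes the last row of \<open>M\<close> zero, so \<open>M\<close> is singular.\<close>
  have "transpose_mat M *\<^sub>v unit_vec n (n - 1) = row M (n - 1)"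
    using M len by (simp add: mult_mat_vec_unit_vec[of _ n n] col_transpose)
  also have "\<dots> = 0\<^sub>v n"
  proof -
    have "\<not> n - 1 < length L" using len by simp
    then show ?thesis using row_M[of "n - 1"] len unfolding rs_def by (simp add: nth_append)
  qed
  finally have "det (transpose_mat M) = 0"
    using det_0_iff_vec_prod_zero_field[of "transpose_mat M" n] M len
    by (auto intro!: exI[of _ "unit_vec n (n - 1)"])
  then have "det M = 0" using M by (simp add: det_transpose)
  then obtain z where z: "z \<in> carrier_vec n" "z \<noteq> 0\<^sub>v n" "M *\<^sub>v z = 0\<^sub>v n"
    using det_0_iff_vec_prod_zero_field[OF M] by auto
  have "v \<bullet> z = 0" if "v \<in> set L" for v
  proof -
    from that obtain l where l: "l < length L" "L ! l = v" by (auto simp: in_set_conv_nth)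
    then have "row M l = v" using row_M[of l] len unfolding rs_def by (simp add: nth_append)
    then show ?thesis using arg_cong[OF z(3), of "\<lambda>w. w $ l"] M l len by simp
  qed
  then show ?thesis using z by blast
qed

lemma quadratic_form_congruence:
  fixes D :: "'a :: comm_semiring_0 mat"
  assumes P: "P \<in> carrier_mat n n" and D: "D \<in> carrier_mat n n" and z: "z \<in> carrier_vec n"
  shows "z \<bullet> ((transpose_mat P * D * P) *\<^sub>v z) = (P *\<^sub>v z) \<bullet> (D *\<^sub>v (P *\<^sub>v z))"
proof -
  let ?w = "D *\<^sub>v (P *\<^sub>v z)"
  have w: "?w \<in> carrier_vec n" using P D z by simp
  have assoc: "(transpose_mat P * D * P) *\<^sub>v z = transpose_mat P *\<^sub>v ?w"
    using P D z by (simp add: assoc_mult_mat_vec[of _ n n _ n])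
  have "z \<bullet> (transpose_mat P *\<^sub>v ?w) = (transpose_mat P *\<^sub>v ?w) \<bullet> z"
    by (rule comm_scalar_prod[of _ n]) (use P z w in auto)
  also have "\<dots> = ?w \<bullet> (P *\<^sub>v z)" by (rule transpose_vec_mult_scalar[OF P z w])
  also have "\<dots> = (P *\<^sub>v z) \<bullet> ?w" by (rule comm_scalar_prod[of _ n]) (use P z w in auto)
  finally show ?thesis unfolding assoc .
qed

lemma diag_quadratic_form_pos:
  fixes ys :: "'a :: linordered_field list"
  assumes z: "z \<in> carrier_vec (length ys)" "z \<noteq> 0\<^sub>v (length ys)"
    and supp: "\<And>j. j < length ys \<Longrightarrow> z $ j \<noteq> 0 \<Longrightarrow> 0 < ys ! j"
  shows "0 < z \<bullet> (diag_of_list ys *\<^sub>v z)"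
proof -
  from z obtain k where k: "k < length ys" "z $ k \<noteq> 0"
    by (metis carrier_vecD eq_vecI index_zero_vec)
  have "0 < (\<Sum>i<length ys. ys ! i * (z $ i * z $ i))"
  proof (rule sum_pos2[of _ k])
    show "0 < ys ! k * (z $ k * z $ k)"
      using k supp[OF k] by (auto intro!: mult_pos_pos simp: zero_less_mult_iff)
    show "0 \<le> ys ! i * (z $ i * z $ i)" if "i \<in> {..<length ys}" for i
      using that supp[of i] by (cases "z $ i = 0") auto
  qed (use k in auto)
  then show ?thesis using diag_of_list_quadratic_form[of z ys] z by simp
qed

lemma diag_quadratic_form_nonpos:
  fixes xs :: "'a :: linordered_field list"
  assumes "dim_vec w = length xs" and supp: "\<And>i. i < length xs \<Longrightarrow> 0 < xs ! i \<Longrightarrow> w $ i = 0"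
  shows "w \<bullet> (diag_of_list xs *\<^sub>v w) \<le> 0"
proof -
  have "(\<Sum>i<length xs. xs ! i * (w $ i * w $ i)) \<le> 0"
  proof (rule sum_nonpos)
    show "xs ! i * (w $ i * w $ i) \<le> 0" if "i \<in> {..<length xs}" for i
      using that supp[of i] by (cases "0 < xs ! i") (auto intro: mult_nonpos_nonneg)
  qed
  then show ?thesis using diag_of_list_quadratic_form[of w xs] assms(1) by simp
qed

lemma sylvester_num_pos_le:
  assumes P: "P \<in> carrier_mat n n" and len_xs: "length xs = n" and len_ys: "length ys = n"
    and cong: "transpose_mat P * diag_of_list xs * P = diag_of_list (ys :: 'a :: linordered_field list)"
  shows "num_pos ys \<le> num_pos xs"
proof (rule ccontr)
  define Ix where "Ix = {i. i < n \<and> 0 < xs ! i}"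
  define Iy where "Iy = {i. i < n \<and> 0 < ys ! i}"
  have Ix: "finite Ix" "Ix \<subseteq> {..<n}" and Iy: "finite Iy" "Iy \<subseteq> {..<n}"
    unfolding Ix_def Iy_def by auto
  \<comment> \<open>Fewer than \<open>n\<close> linear conditions: \<open>z\<close> lives on \<open>Iy\<close> and \<open>P z\<close> vanishes on \<open>Ix\<close>.\<close>
  define L where "L = map (row P) (sorted_list_of_set Ix) @ map (unit_vec n) (sorted_list_of_set ({..<n} - Iy))"
  assume "\<not> num_pos ys \<le> num_pos xs"
  then have "card Ix < card Iy"
    unfolding Ix_def Iy_def num_pos_def length_filter_conv_card len_xs len_ys by simp
  moreover have "card Iy \<le> n" using card_mono[OF _ Iy(2)] by simp
  ultimately have "length L < n" unfolding L_def using Iy by (simp add: card_Diff_subset)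
  moreover have "set L \<subseteq> carrier_vec n" unfolding L_def using P by auto
  ultimately obtain z where z: "z \<in> carrier_vec n" "z \<noteq> 0\<^sub>v n" "\<forall>v \<in> set L. v \<bullet> z = 0"
    using exists_nonzero_orthogonal_vec by blast
  have z_outside: "z $ j = 0" if "j < n" "j \<notin> Iy" for j
  proof -
    have "unit_vec n j \<in> set L" unfolding L_def using that Iy by auto
    then have "unit_vec n j \<bullet> z = 0" using z(3) by blast
    then show ?thesis using z(1) that(1) by (simp add: scalar_prod_left_unit)
  qed
  have Pz_inside: "(P *\<^sub>v z) $ i = 0" if "i \<in> Ix" for i
    using z that Ix P unfolding L_def by auto
  have "0 < z \<bullet> (diag_of_list ys *\<^sub>v z)"
    using z z_outside len_ys by (intro diag_quadratic_form_pos) (auto simp: Iy_def)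
  also have "\<dots> = (P *\<^sub>v z) \<bullet> (diag_of_list xs *\<^sub>v (P *\<^sub>v z))"
    unfolding cong[symmetric] using P z len_xs by (intro quadratic_form_congruence) auto
  also have "\<dots> \<le> 0"
    using P len_xs Pz_inside by (intro diag_quadratic_form_nonpos) (auto simp: Ix_def)
  finally show False by simp
qed

theorem sylvester_law_of_inertia:
  assumes "congruent_mat (diag_of_list xs) (diag_of_list (ys :: 'a :: linordered_field list))"
  shows "num_pos xs = num_pos ys" and "num_neg xs = num_neg ys"
proof -
  have le: "num_pos ys \<le> num_pos xs" if "congruent_mat (diag_of_list xs) (diag_of_list ys)"
    for xs ys :: "'a list"
    using that sylvester_num_pos_le unfolding congruent_mat_def by (metis carrier_matD(1) dim_diag_of_list(1))
  show "num_pos xs = num_pos ys" using le[OF assms] le[OF congruent_mat_sym[OF assms]] by simp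
  have "congruent_mat (diag_of_list (map uminus xs)) (diag_of_list (map uminus ys))"
    using congruent_mat_uminus[OF assms] by (simp add: uminus_diag_of_list)
  then show "num_neg xs = num_neg ys"
    unfolding num_neg_eq_num_pos_uminus using le congruent_mat_sym by (metis le_antisym)
qed

section \<open>The spectral theorem for real symmetric matrices\<close>

lemma scalar_prod_self_pos:
  assumes "w \<in> carrier_vec n" "w \<noteq> 0\<^sub>v n"
  shows "0 < w \<bullet> (w :: real vec)"
proof -
  from assms obtain k where k: "k < n" "w $ k \<noteq> 0"
    by (metis carrier_vecD eq_vecI index_zero_vec)
  have "w \<bullet> w = (\<Sum>i<n. w $ i * w $ i)" using assms by (simp add: scalar_prod_def atLeast0LessThan)
  also have "\<dots> > 0"
    by (rule sum_pos2[of _ k]) (use k in \<open>auto simp: zero_less_mult_iff linorder_neq_iff\<close>)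
  finally show ?thesis .
qed

lemma eigenvalue_of_real_symmetric_is_real:
  assumes A: "A \<in> carrier_mat n n" and sym: "transpose_mat A = (A :: real mat)"
    and ev: "eigenvector (map_mat complex_of_real A) v lam"
  shows "lam \<in> \<real>"
proof -
  have v: "v \<in> carrier_vec n" "v \<noteq> 0\<^sub>v n" "map_mat of_real A *\<^sub>v v = lam \<cdot>\<^sub>v v"
    using ev A unfolding eigenvector_def by auto
  have Av: "(\<Sum>k<n. of_real (A $$ (i,k)) * v $ k) = lam * v $ i" if "i < n" for i
    using arg_cong[OF v(3), of "\<lambda>w. w $ i"] that A v(1)
    by (simp add: scalar_prod_def atLeast0LessThan)
  \<comment> \<open>The hermitian form \<open>v\<^sup>* A v\<close> equals \<open>lam |v|\<^sup>2\<close> and is real because \<open>A\<close> is real symmetric.\<close>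
  define S where "S = (\<Sum>i<n. \<Sum>k<n. cnj (v $ i) * of_real (A $$ (i,k)) * v $ k)"
  define X where "X = (\<Sum>i<n. (cmod (v $ i))\<^sup>2)"
  have "S = (\<Sum>i<n. cnj (v $ i) * (\<Sum>k<n. of_real (A $$ (i,k)) * v $ k))"
    unfolding S_def by (intro sum.cong refl) (simp add: sum_distrib_left mult.assoc)
  also have "\<dots> = (\<Sum>i<n. lam * (cnj (v $ i) * v $ i))"
    by (intro sum.cong refl) (simp add: Av)
  also have "\<dots> = lam * (\<Sum>i<n. cnj (v $ i) * v $ i)"
    by (simp add: sum_distrib_left)
  also have "(\<Sum>i<n. cnj (v $ i) * v $ i) = of_real X"
    unfolding X_def of_real_sum by (intro sum.cong refl) (simp only: complex_norm_square mult.commute)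
  finally have S: "S = lam * of_real X" .
  have "cnj S = (\<Sum>i<n. \<Sum>k<n. v $ i * of_real (A $$ (i,k)) * cnj (v $ k))"
    unfolding S_def by (simp add: cnj_sum)
  also have "\<dots> = (\<Sum>k<n. \<Sum>i<n. v $ i * of_real (A $$ (i,k)) * cnj (v $ k))"
    by (rule sum.swap)
  also have "\<dots> = S"
    unfolding S_def using symmetric_index[OF sym A]
    by (intro sum.cong refl) (simp add: mult.commute mult.left_commute)
  finally have "cnj S = S" .
  moreover obtain k where "k < n" "v $ k \<noteq> 0" using v(1,2) by (metis carrier_vecD eq_vecI index_zero_vec)
  then have "X > 0" unfolding X_def by (intro sum_pos2[of _ k]) auto
  ultimately have "cnj lam = lam" unfolding S by simp
  then show ?thesis by (simp add: Reals_cnj_iff)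
qed

lemma real_symmetric_unit_eigenvector:
  assumes A: "A \<in> carrier_mat (Suc n) (Suc n)" and sym: "transpose_mat A = (A :: real mat)"
  shows "\<exists>e u. u \<in> carrier_vec (Suc n) \<and> u \<bullet> u = 1 \<and> A *\<^sub>v u = e \<cdot>\<^sub>v u"
proof -
  let ?Ac = "map_mat complex_of_real A"
  have Ac: "?Ac \<in> carrier_mat (Suc n) (Suc n)" using A by simp
  have cp: "char_poly ?Ac = map_poly of_real (char_poly A)" by (rule of_real_hom.char_poly_hom[OF A])
  have "\<not> constant (poly (char_poly ?Ac))"
    using degree_monic_char_poly[OF Ac] by (simp add: constant_degree)
  from fundamental_theorem_of_algebra[OF this] obtain lam where lam: "poly (char_poly ?Ac) lam = 0" by auto
  then obtain v where "eigenvector ?Ac v lam"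
    using eigenvalue_root_char_poly[OF Ac] unfolding eigenvalue_def by auto
  from eigenvalue_of_real_symmetric_is_real[OF A sym this] obtain r where r: "lam = of_real r"
    by (auto elim: Reals_cases)
  have "of_real (poly (char_poly A) r) = (0 :: complex)"
    using lam unfolding r cp of_real_hom.poly_map_poly .
  then have "eigenvalue A r" using eigenvalue_root_char_poly[OF A] by simp
  then obtain w where "eigenvector A w r" unfolding eigenvalue_def by auto
  then have w: "w \<in> carrier_vec (Suc n)" "w \<noteq> 0\<^sub>v (Suc n)" "A *\<^sub>v w = r \<cdot>\<^sub>v w"
    unfolding eigenvector_def using A by auto
  have pos: "0 < w \<bullet> w" by (rule scalar_prod_self_pos[OF w(1,2)])
  define u where "u = (1 / sqrt (w \<bullet> w)) \<cdot>\<^sub>v w"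
  have "u \<bullet> u = (1 / sqrt (w \<bullet> w)) * ((1 / sqrt (w \<bullet> w)) * (w \<bullet> w))"
    unfolding u_def using w(1) by (simp add: smult_scalar_prod_distrib[of _ "Suc n"] scalar_prod_smult_distrib[of _ "Suc n"])
  also have "\<dots> = 1" using pos by (simp add: field_simps)
  finally have "u \<bullet> u = 1" .
  moreover have "A *\<^sub>v u = r \<cdot>\<^sub>v u" unfolding u_def using mult_mat_vec[OF A w(1)] w(3)
    by (simp add: smult_smult_assoc mult.commute)
  moreover have "u \<in> carrier_vec (Suc n)" unfolding u_def using w(1) by simp
  ultimately show ?thesis by blast
qed

definition householder_mat :: "real vec \<Rightarrow> real mat" where
  "householder_mat w = mat (dim_vec w) (dim_vec w)
     (\<lambda>(i,j). (if i = j then 1 else 0) - 2 / (w \<bullet> w) * (w $ i * w $ j))"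

lemma carrier_householder_mat[simp]: "householder_mat w \<in> carrier_mat (dim_vec w) (dim_vec w)"
  by (simp add: householder_mat_def)

lemma transpose_householder_mat[simp]: "transpose_mat (householder_mat w) = householder_mat w"
  by (rule eq_matI) (auto simp: householder_mat_def mult.commute)

lemma householder_mat_involutive:
  assumes w: "w \<in> carrier_vec N" "w \<noteq> 0\<^sub>v N"
  shows "householder_mat w * householder_mat w = 1\<^sub>m N"
proof (rule eq_matI)
  define c where "c = w \<bullet> w"
  define a where "a = 2 / c"
  define d where "d i j = (if i = j then 1 else (0::real))" for i j :: nat
  have "c > 0" unfolding c_def by (rule scalar_prod_self_pos[OF w])
  then have ac: "a * a * c = 2 * a" unfolding a_def by (simp add: field_simps)
  have c_sum: "c = (\<Sum>k<N. w $ k * w $ k)" unfolding c_def using w by (simp add: scalar_prod_def atLeast0LessThan)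
  have d_left: "(\<Sum>k<N. d i k * f k) = f i" if "i < N" for i f
  proof -
    have "(\<Sum>k<N. d i k * f k) = (\<Sum>k<N. if k = i then f k else 0)" by (rule sum.cong) (auto simp: d_def)
    then show ?thesis using that by simp
  qed
  have d_right: "(\<Sum>k<N. f k * d k i) = f i" if "i < N" for i f
    using d_left[OF that, of f] by (simp add: d_def mult.commute eq_commute)
  fix i j assume "i < dim_row (1\<^sub>m N :: real mat)" "j < dim_col (1\<^sub>m N :: real mat)"
  then have i: "i < N" and j: "j < N" by auto
  have H: "householder_mat w = mat N N (\<lambda>(i,j). d i j - a * (w $ i * w $ j))"
    unfolding householder_mat_def d_def a_def c_def using w by simp
  have "(householder_mat w * householder_mat w) $$ (i,j)
      = (\<Sum>k<N. (d i k - a * (w $ i * w $ k)) * (d k j - a * (w $ k * w $ j)))"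
    using i j unfolding H by (simp add: scalar_prod_def atLeast0LessThan)
  also have "\<dots> = (\<Sum>k<N. d i k * d k j - a * (w $ j * (d i k * w $ k)) - a * (w $ i * (w $ k * d k j))
      + a * a * (w $ i * w $ j) * (w $ k * w $ k))"
    by (intro sum.cong refl) (simp add: algebra_simps)
  also have "\<dots> = d i j - a * (w $ j * w $ i) - a * (w $ i * w $ j) + a * a * (w $ i * w $ j) * c"
    unfolding c_sum using i j
    by (simp add: sum.distrib sum_subtractf sum_distrib_left[symmetric] d_left d_right del: lessThan_Suc)
  also have "a * a * (w $ i * w $ j) * c = (a * a * c) * (w $ i * w $ j)" by (simp add: algebra_simps)
  also have "d i j - a * (w $ j * w $ i) - a * (w $ i * w $ j) + (a * a * c) * (w $ i * w $ j) = d i j"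
    unfolding ac by (simp add: algebra_simps)
  finally show "(householder_mat w * householder_mat w) $$ (i,j) = 1\<^sub>m N $$ (i,j)"
    using i j by (simp add: d_def)
qed (use w in \<open>auto simp: householder_mat_def\<close>)

lemma orthogonal_symmetric_mat_to_unit_vec:
  assumes u: "u \<in> carrier_vec N" "u \<bullet> u = (1 :: real)" and N: "0 < N"
  shows "\<exists>H. H \<in> carrier_mat N N \<and> transpose_mat H = H \<and> H * H = 1\<^sub>m N \<and> H *\<^sub>v unit_vec N 0 = u"
proof (cases "u = unit_vec N 0")
  case True
  then show ?thesis by (intro exI[of _ "1\<^sub>m N"]) auto
next
  case False
  \<comment> \<open>The reflection in the hyperplane orthogonal to \<open>u - e\<^sub>0\<close> swaps the unit vectors \<open>e\<^sub>0\<close> and \<open>u\<close>.\<close>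
  define w where "w = u - unit_vec N 0"
  have w_index: "i < N \<Longrightarrow> w $ i = u $ i - (if i = 0 then 1 else 0)" for i unfolding w_def using u N by auto
  have w: "w \<in> carrier_vec N" "w \<noteq> 0\<^sub>v N"
  proof -
    show "w \<in> carrier_vec N" unfolding w_def using u by simp
    show "w \<noteq> 0\<^sub>v N"
    proof
      assume w0: "w = 0\<^sub>v N"
      have "u = unit_vec N 0"
      proof (rule eq_vecI)
        fix i assume "i < dim_vec (unit_vec N 0 :: real vec)"
        then show "u $ i = unit_vec N 0 $ i"
          using w_index[of i] arg_cong[OF w0, of "\<lambda>v. v $ i"] by auto
      qed (use u in simp)
      then show False using False by simp
    qed
  qed
  let ?H = "householder_mat w"
  have H: "?H \<in> carrier_mat N N" using carrier_householder_mat[of w] w(1) by simp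
  let ?e = "unit_vec N 0 :: real vec"
  have "w \<bullet> w = u \<bullet> (u - ?e) - ?e \<bullet> (u - ?e)"
    unfolding w_def by (rule minus_scalar_prod_distrib) (use u in auto)
  also have "u \<bullet> (u - ?e) = u \<bullet> u - u \<bullet> ?e" by (rule scalar_prod_minus_distrib) (use u in auto)
  also have "?e \<bullet> (u - ?e) = ?e \<bullet> u - ?e \<bullet> ?e" by (rule scalar_prod_minus_distrib) (use u in auto)
  finally have "w \<bullet> w = u \<bullet> u - 2 * u $ 0 + 1"
    using u N by (simp add: scalar_prod_left_unit scalar_prod_right_unit)
  then have "w \<bullet> w = - 2 * w $ 0" using u(2) w_index[OF N] by simp
  moreover have "w \<bullet> w > 0" by (rule scalar_prod_self_pos[OF w])
  ultimately have w0: "2 / (w \<bullet> w) * w $ 0 = -1" by (simp add: field_simps)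
  have "?H *\<^sub>v unit_vec N 0 = col ?H 0" by (rule mult_mat_vec_unit_vec[OF H N])
  also have "\<dots> = u"
  proof (rule eq_vecI)
    fix i assume "i < dim_vec u"
    then have i: "i < N" using u by simp
    have "col ?H 0 $ i = (if i = 0 then 1 else 0) - w $ i * (2 / (w \<bullet> w) * w $ 0)"
      using i N w by (simp add: householder_mat_def)
    then show "col ?H 0 $ i = u $ i" unfolding w0 using w_index[OF i] by simp
  qed (use u H in auto)
  finally show ?thesis using H householder_mat_involutive[OF w] by auto
qed

lemma orthogonal_mult:
  assumes "P \<in> carrier_mat n n" "Q \<in> carrier_mat n n"
    and "transpose_mat P * P = 1\<^sub>m n" "transpose_mat Q * Q = 1\<^sub>m n"
  shows "transpose_mat (P * Q) * (P * Q) = (1\<^sub>m n :: 'a :: comm_ring_1 mat)"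
  using transpose_congruence_mult[OF one_carrier_mat assms(1,2)] assms by simp

lemma orthogonal_block_diag_one:
  assumes "Q \<in> carrier_mat n n" "transpose_mat Q * Q = 1\<^sub>m n"
  shows "transpose_mat (block_diag (1\<^sub>m 1) Q) * block_diag (1\<^sub>m 1) Q = (1\<^sub>m (Suc n) :: 'a :: comm_ring_1 mat)"
proof -
  have "transpose_mat (block_diag (1\<^sub>m 1) Q) * block_diag (1\<^sub>m 1) (1\<^sub>m n) * block_diag (1\<^sub>m 1) Q
      = block_diag (1\<^sub>m 1) (1\<^sub>m n)"
    using block_diag_congruence[of "1\<^sub>m 1" 1 "1\<^sub>m n" n "1\<^sub>m 1" Q] assms by simp
  moreover have "block_diag (1\<^sub>m 1) Q \<in> carrier_mat (Suc n) (Suc n)"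
    using carrier_block_diag[of "1\<^sub>m 1" 1 Q n] assms(1) by simp
  ultimately show ?thesis by (simp add: block_diag_one)
qed

lemma real_symmetric_orthogonal_first_column:
  assumes A: "A \<in> carrier_mat (Suc n) (Suc n)" and sym: "transpose_mat A = (A :: real mat)"
  shows "\<exists>H. H \<in> carrier_mat (Suc n) (Suc n) \<and> transpose_mat H * H = 1\<^sub>m (Suc n) \<and>
    (\<forall>i. 0 < i \<longrightarrow> i < Suc n \<longrightarrow> (transpose_mat H * A * H) $$ (i,0) = 0)"
proof -
  let ?N = "Suc n"
  from real_symmetric_unit_eigenvector[OF A sym] obtain e u
    where u: "u \<in> carrier_vec ?N" "u \<bullet> u = 1" "A *\<^sub>v u = e \<cdot>\<^sub>v u" by auto
  from orthogonal_symmetric_mat_to_unit_vec[OF u(1,2)] obtain H where H: "H \<in> carrier_mat ?N ?N"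
    "transpose_mat H = H" "H * H = 1\<^sub>m ?N" "H *\<^sub>v unit_vec ?N 0 = u" by auto
  let ?M = "transpose_mat H * A * H"
  have M: "?M \<in> carrier_mat ?N ?N" using A H by auto
  have e0: "unit_vec ?N 0 \<in> carrier_vec ?N" by simp
  have Hu: "H *\<^sub>v u = unit_vec ?N 0"
    unfolding H(4)[symmetric] using H(1,3) e0 by (simp add: assoc_mult_mat_vec[symmetric, of _ ?N ?N])
  \<comment> \<open>\<open>H\<close> maps \<open>e\<^sub>0\<close> to the eigenvector \<open>u\<close>, so the first column of \<open>H\<^sup>T A H\<close> is \<open>e e\<^sub>0\<close>.\<close>
  have "col ?M 0 = ?M *\<^sub>v unit_vec ?N 0" by (rule mult_mat_vec_unit_vec[symmetric, OF M]) simp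
  also have "\<dots> = (transpose_mat H * A) *\<^sub>v (H *\<^sub>v unit_vec ?N 0)"
    by (rule assoc_mult_mat_vec[of _ ?N ?N _ ?N]) (use A H e0 in auto)
  also have "\<dots> = H *\<^sub>v (A *\<^sub>v u)" unfolding H(4) H(2)
    by (rule assoc_mult_mat_vec[of _ ?N ?N _ ?N]) (use A H u in auto)
  also have "\<dots> = e \<cdot>\<^sub>v unit_vec ?N 0" unfolding u(3) mult_mat_vec[OF H(1) u(1)] Hu ..
  finally have col0: "col ?M 0 = e \<cdot>\<^sub>v unit_vec ?N 0" .
  have "?M $$ (i,0) = 0" if "0 < i" "i < ?N" for i
  proof -
    have "?M $$ (i,0) = col ?M 0 $ i" using index_col[of i ?M 0] that carrier_matD[OF M] by simp
    then show ?thesis unfolding col0 using that by simp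
  qed
  then show ?thesis using H(1,2,3) by (intro exI[of _ H]) auto
qed

theorem real_symmetric_orthogonal_diag:
  assumes "A \<in> carrier_mat n n" "transpose_mat A = (A :: real mat)"
  shows "\<exists>P xs. P \<in> carrier_mat n n \<and> transpose_mat P * P = 1\<^sub>m n \<and> length xs = n \<and>
    transpose_mat P * A * P = diag_of_list xs"
  using assms
proof (induction n arbitrary: A)
  case 0
  then have "A = diag_of_list []" by (intro eq_matI) auto
  then show ?case by (intro exI[of _ "1\<^sub>m 0"] exI[of _ "[]"]) auto
next
  case (Suc n A)
  let ?N = "Suc n"
  from real_symmetric_orthogonal_first_column[OF Suc.prems] obtain H where H: "H \<in> carrier_mat ?N ?N"
    "transpose_mat H * H = 1\<^sub>m ?N" "\<forall>i. 0 < i \<longrightarrow> i < ?N \<longrightarrow> (transpose_mat H * A * H) $$ (i,0) = 0"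
    by auto
  let ?M = "transpose_mat H * A * H"
  have M: "?M \<in> carrier_mat ?N ?N" using Suc.prems(1) H(1) by auto
  have "?M $$ (i,0) = 0" if "0 < i" "i < ?N" for i using H(3) that by blast
  note split = block_diag_lower_right_block[OF M symmetric_congruence[OF Suc.prems(1) H(1) Suc.prems(2)] this]
  from Suc.IH[OF split(3,2)] obtain Q ys where Q: "Q \<in> carrier_mat n n" "transpose_mat Q * Q = 1\<^sub>m n"
    "length ys = n" "transpose_mat Q * lower_right_block ?M * Q = diag_of_list ys" by auto
  let ?B = "block_diag (1\<^sub>m 1) Q"
  have B: "?B \<in> carrier_mat ?N ?N" using carrier_block_diag[of "1\<^sub>m 1" 1 Q n] Q(1) by simp
  have "transpose_mat (H * ?B) * (H * ?B) = 1\<^sub>m ?N"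
    using orthogonal_mult[OF H(1) B H(2) orthogonal_block_diag_one[OF Q(1,2)]] .
  moreover have "transpose_mat (H * ?B) * A * (H * ?B) = diag_of_list (?M $$ (0,0) # ys)"
  proof -
    have "transpose_mat (H * ?B) * A * (H * ?B)
        = transpose_mat ?B * block_diag (diag_of_list [?M $$ (0,0)]) (lower_right_block ?M) * ?B"
      using transpose_congruence_mult[OF Suc.prems(1) H(1) B] split(1) by simp
    also have "\<dots> = block_diag (diag_of_list [?M $$ (0,0)]) (diag_of_list ys)"
      using block_diag_congruence[of "diag_of_list [?M $$ (0,0)]" 1 "lower_right_block ?M" n "1\<^sub>m 1" Q]
        carrier_diag_of_list[of "[?M $$ (0,0)]"] split(3) Q(1,4) by simp
    finally show ?thesis by (simp add: block_diag_diag_of_list)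
  qed
  ultimately show ?case using H(1) B Q(3) by (intro exI[of _ "H * ?B"] exI[of _ "?M $$ (0,0) # ys"]) auto
qed

lemma real_symmetric_similar_congruent_diag:
  assumes A: "A \<in> carrier_mat n n" and sym: "transpose_mat A = (A :: real mat)"
  shows "\<exists>xs. length xs = n \<and> similar_mat A (diag_of_list xs) \<and> congruent_mat A (diag_of_list xs)"
proof -
  from real_symmetric_orthogonal_diag[OF A sym] obtain P xs where P: "P \<in> carrier_mat n n"
    "transpose_mat P * P = 1\<^sub>m n" "length xs = n" "transpose_mat P * A * P = diag_of_list xs" by auto
  have PT: "transpose_mat P \<in> carrier_mat n n" using P by simp
  have PP: "P * transpose_mat P = 1\<^sub>m n" by (rule mat_mult_left_right_inverse[OF PT P(1) P(2)])
  have D: "diag_of_list xs \<in> carrier_mat n n" using P(3) by auto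
  have "P * diag_of_list xs * transpose_mat P = (P * transpose_mat P) * A * (P * transpose_mat P)"
    unfolding P(4)[symmetric] using A P(1) PT by (simp add: assoc_mult_mat[of _ n n _ n _ n])
  then have "A = P * diag_of_list xs * transpose_mat P" unfolding PP using A by simp
  then have "similar_mat_wit A (diag_of_list xs) P (transpose_mat P)"
    unfolding similar_mat_wit_def Let_def using A D P(1,2) PT PP by auto
  then have "similar_mat A (diag_of_list xs)" unfolding similar_mat_def by blast
  moreover have "congruent_mat A (diag_of_list xs)"
    unfolding congruent_mat_def using A D P(1,4) orthogonal_det_nonzero[OF P(1,2)] by blast
  ultimately show ?thesis using P(3) by blast
qed

section \<open>The signature\<close>

lemma order_prod_linear_factors: "order y (\<Prod>x\<leftarrow>xs. [:- x, 1:]) = count (mset xs) (y :: 'a :: idom)"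
proof (induction xs)
  case (Cons x xs)
  have "(\<Prod>x\<leftarrow>xs. [:- x, 1:]) \<noteq> (0 :: 'a poly)" unfolding prod_list_zero_iff by auto
  then have "[:- x, 1:] * (\<Prod>x\<leftarrow>xs. [:- x, 1:]) \<noteq> 0" by (metis mult_eq_0_iff pCons_eq_0_iff one_neq_zero)
  then have "order y ([:- x, 1:] * (\<Prod>x\<leftarrow>xs. [:- x, 1:])) = order y [:- x, 1:] + order y (\<Prod>x\<leftarrow>xs. [:- x, 1:])"
    by (rule order_mult)
  then show ?case using Cons by (simp add: order_linear')
qed (simp add: order_0I)

lemma poly_prod_linear_factors_eq_0: "poly (\<Prod>x\<leftarrow>xs. [:- x, 1:]) y = 0 \<longleftrightarrow> (y :: 'a :: idom) \<in> set xs"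
  by (induction xs) auto

lemma sum_order_prod_linear_factors:
  fixes Q :: "'a :: idom \<Rightarrow> bool" and xs :: "'a list"
  defines "p \<equiv> (\<Prod>x\<leftarrow>xs. [:- x, 1:])"
  shows "(\<Sum>x\<in>{x. Q x \<and> poly p x = 0}. order x p) = length (filter Q xs)"
proof -
  have roots: "{x. Q x \<and> poly p x = 0} = set_mset (mset (filter Q xs))"
    unfolding p_def poly_prod_linear_factors_eq_0 by auto
  have "(\<Sum>x\<in>{x. Q x \<and> poly p x = 0}. order x p)
      = (\<Sum>x\<in>set_mset (mset (filter Q xs)). count (mset (filter Q xs)) x)"
    unfolding roots by (rule sum.cong[OF refl]) (auto simp: p_def order_prod_linear_factors)
  also have "\<dots> = size (mset (filter Q xs))" by (rule size_multiset_overloaded_eq[symmetric])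
  finally show ?thesis by (metis mset_filter size_mset)
qed

lemma signature_similar_diag:
  assumes "similar_mat (map_mat real_of_rat A) (diag_of_list xs)"
  shows "signature A = int (num_pos xs) - int (num_neg xs)"
proof -
  have "char_poly (map_mat real_of_rat A) = char_poly (diag_of_list xs)"
    by (rule char_poly_similar[OF assms])
  also have "\<dots> = (\<Prod>a\<leftarrow>xs. [:- a, 1:])"
    using char_poly_upper_triangular[OF carrier_diag_of_list upper_triangular_diag_of_list] by simp
  finally have cp: "char_poly (map_mat real_of_rat A) = (\<Prod>a\<leftarrow>xs. [:- a, 1:])" .
  show ?thesis
    unfolding signature_def Let_def cp sum_order_prod_linear_factors num_pos_def num_neg_def ..
qed

theorem signature_eq_inertia:
  assumes A: "A \<in> carrier_mat n n" "transpose_mat A = A" and cong: "congruent_mat A (diag_of_list ds)"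
  shows "signature A = int (num_pos ds) - int (num_neg ds)"
proof -
  let ?Ar = "map_mat real_of_rat A"
  have "?Ar \<in> carrier_mat n n" "transpose_mat ?Ar = ?Ar" using A by (auto simp: map_mat_transpose)
  from real_symmetric_similar_congruent_diag[OF this] obtain xs
    where xs: "similar_mat ?Ar (diag_of_list xs)" "congruent_mat ?Ar (diag_of_list xs)" by auto
  have "congruent_mat ?Ar (diag_of_list (map real_of_rat ds))"
    using congruent_mat_map_of_rat[OF cong] by (simp add: map_mat_diag_of_list)
  then have "congruent_mat (diag_of_list (map real_of_rat ds)) (diag_of_list xs)"
    using congruent_mat_trans congruent_mat_sym xs(2) by blast
  from sylvester_law_of_inertia[OF this] signature_similar_diag[OF xs(1)] show ?thesis by simp
qed

section \<open>Sums of four squares\<close>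

lemma euler_four_square_identity:
  fixes x1 :: "'a :: comm_ring"
  shows "(x1*x1 + x2*x2 + x3*x3 + x4*x4) * (y1*y1 + y2*y2 + y3*y3 + y4*y4) =
   (x1*y1 - x2*y2 - x3*y3 - x4*y4) * (x1*y1 - x2*y2 - x3*y3 - x4*y4) +
   (x1*y2 + x2*y1 + x3*y4 - x4*y3) * (x1*y2 + x2*y1 + x3*y4 - x4*y3) +
   (x1*y3 - x2*y4 + x3*y1 + x4*y2) * (x1*y3 - x2*y4 + x3*y1 + x4*y2) +
   (x1*y4 + x2*y3 - x3*y2 + x4*y1) * (x1*y4 + x2*y3 - x3*y2 + x4*y1)"
  by (simp only: algebra_simps)

definition sum_of_four_squares :: "'a :: comm_ring_1 \<Rightarrow> bool" where
  "sum_of_four_squares a \<longleftrightarrow> (\<exists>x1 x2 x3 x4. a = x1*x1 + x2*x2 + x3*x3 + x4*x4)"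

lemma sum_of_four_squares_mult:
  "sum_of_four_squares a \<Longrightarrow> sum_of_four_squares b \<Longrightarrow> sum_of_four_squares (a * b)"
  unfolding sum_of_four_squares_def by (metis euler_four_square_identity)

lemma sum_of_four_squares_divide_square:
  assumes "sum_of_four_squares a"
  shows "sum_of_four_squares (a / (m * m :: 'a :: field))"
proof -
  from assms obtain x1 x2 x3 x4 where a: "a = x1*x1 + x2*x2 + x3*x3 + x4*x4"
    unfolding sum_of_four_squares_def by auto
  have "a / (m * m) = (x1/m)*(x1/m) + (x2/m)*(x2/m) + (x3/m)*(x3/m) + (x4/m)*(x4/m)"
    unfolding a by (simp add: add_divide_distrib)
  then show ?thesis unfolding sum_of_four_squares_def by blast
qed

lemma square_mod_prime_inj_on:
  assumes p: "prime (p :: int)" and x: "x \<in> {0..(p - 1) div 2}" and y: "y \<in> {0..(p - 1) div 2}"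
    and eq: "(x * x) mod p = (y * y) mod p"
  shows "x = y"
proof -
  have "p dvd (x - y) * (x + y)"
    using eq by (metis mod_eq_dvd_iff square_diff_square_factored mult.commute)
  then have "p dvd x - y \<or> p dvd x + y" using p prime_dvd_mult_iff by blast
  moreover have "\<bar>x - y\<bar> < p" "0 \<le> x + y" "x + y < p" using x y prime_ge_2_int[OF p] by auto
  moreover have "x - y = 0" if "p dvd x - y"
    using dvd_imp_le_int[OF _ that] \<open>\<bar>x - y\<bar> < p\<close> by fastforce
  moreover have "x + y = 0" if "p dvd x + y"
    using dvd_imp_le_int[OF _ that] \<open>0 \<le> x + y\<close> \<open>x + y < p\<close> by fastforce
  ultimately show ?thesis using x y by auto
qed

lemma prime_dvd_two_squares_plus_one:
  assumes p: "prime (p :: int)" "odd p"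
  shows "\<exists>x y. 0 \<le> x \<and> 0 \<le> y \<and> 2 * x < p \<and> 2 * y < p \<and> p dvd (x*x + y*y + 1)"
proof -
  define h where "h = (p - 1) div 2"
  have p2: "p \<ge> 2" using prime_ge_2_int[OF p(1)] .
  have ph: "p = 2 * h + 1" unfolding h_def using p(2) by (auto elim!: oddE)
  define f where "f x = (x * x) mod p" for x
  define g where "g y = (- 1 - y * y) mod p" for y
  \<comment> \<open>Pigeonhole: the \<open>h + 1\<close> values of \<open>x\<^sup>2\<close> and of \<open>-1 - y\<^sup>2\<close> modulo \<open>p = 2h + 1\<close> cannot be disjoint.\<close>
  have "inj_on f {0..h}" unfolding inj_on_def f_def h_def using square_mod_prime_inj_on[OF p(1)] by blast
  moreover have "inj_on g {0..h}"
  proof (rule inj_onI)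
    fix x y assume xy: "x \<in> {0..h}" "y \<in> {0..h}" "g x = g y"
    then have "p dvd (- 1 - x * x) - (- 1 - y * y)" unfolding g_def by (simp add: mod_eq_dvd_iff)
    then have "p dvd - (x * x - y * y)" by (simp add: algebra_simps)
    then have "(x * x) mod p = (y * y) mod p" by (simp only: dvd_minus_iff mod_eq_dvd_iff)
    then show "x = y" using square_mod_prime_inj_on[OF p(1)] xy(1,2) unfolding h_def by blast
  qed
  ultimately have card: "card (f ` {0..h}) = nat h + 1" "card (g ` {0..h}) = nat h + 1"
    using ph p2 by (simp_all add: card_image)
  have "f ` {0..h} \<inter> g ` {0..h} \<noteq> {}"
  proof
    assume "f ` {0..h} \<inter> g ` {0..h} = {}"
    then have "card (f ` {0..h} \<union> g ` {0..h}) = 2 * nat h + 2" by (simp add: card_Un_disjoint card)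
    moreover have "card (f ` {0..h} \<union> g ` {0..h}) \<le> card {0..<p}"
      by (rule card_mono) (use p2 in \<open>auto simp: f_def g_def\<close>)
    moreover have "nat p = 2 * nat h + 1" using ph p2 by (simp add: nat_add_distrib nat_mult_distrib)
    ultimately show False by simp
  qed
  then obtain z where "z \<in> f ` {0..h}" "z \<in> g ` {0..h}" by blast
  then obtain x y where xy: "x \<in> {0..h}" "y \<in> {0..h}" "f x = g y" by (metis imageE)
  then have "p dvd (x * x) - (- 1 - y * y)" unfolding f_def g_def by (simp add: mod_eq_dvd_iff)
  then show ?thesis using xy ph by (intro exI[of _ x] exI[of _ y]) (auto simp: algebra_simps)
qed

lemma sum_of_four_squares_of_multiple:
  assumes "sum_of_four_squares (of_nat m :: rat)" "0 < m" "x * x + y * y + 1 = int N * int m"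
  shows "sum_of_four_squares (of_nat N :: rat)"
proof -
  have "sum_of_four_squares (of_int x * of_int x + of_int y * of_int y + 1 * 1 + 0 * (0 :: rat))"
    unfolding sum_of_four_squares_def by blast
  \<comment> \<open>Euler's identity: \<open>N m\<^sup>2 = (x\<^sup>2 + y\<^sup>2 + 1) m\<close> is a sum of four squares, and hence so is \<open>N\<close> over \<open>\<rat>\<close>.\<close>
  from sum_of_four_squares_divide_square[OF sum_of_four_squares_mult[OF this assms(1)], of "of_nat m"]
  have "sum_of_four_squares ((of_int x * of_int x + of_int y * of_int y + 1) * of_nat m / (of_nat m * of_nat m :: rat))"
    by simp
  moreover have "(of_int x * of_int x + of_int y * of_int y + 1 :: rat) = of_nat N * of_nat m"
    using arg_cong[OF assms(3), of "of_int :: int \<Rightarrow> rat"] by simp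
  ultimately show ?thesis using assms(2) by simp
qed

lemma prime_multiple_of_two_squares_plus_one:
  assumes "prime N" "2 < N"
  shows "\<exists>x y m. 0 < m \<and> m < N \<and> x * x + y * y + 1 = int N * int m"
proof -
  have "prime (int N)" "odd (int N)" using assms prime_odd_nat[of N] by auto
  from prime_dvd_two_squares_plus_one[OF this] obtain x y m where xy: "0 \<le> x" "0 \<le> y"
    "2 * x < int N" "2 * y < int N" "x * x + y * y + 1 = int N * m" by (auto elim: dvdE)
  have "0 \<le> x * x + y * y" by simp
  then have "0 < int N * m" unfolding xy(5)[symmetric] by linarith
  then have m_pos: "m > 0" by (simp add: zero_less_mult_iff)
  \<comment> \<open>\<open>x, y < N/2\<close> forces \<open>m < N\<close>.\<close>
  have "(2*x) * (2*x) < int N * int N" using xy(1,3) by (intro mult_strict_mono) auto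
  moreover have "(2*y) * (2*y) < int N * int N" using xy(2,4) by (intro mult_strict_mono) auto
  moreover have "2 * 2 \<le> int N * int N" using assms(2) by (intro mult_mono) auto
  moreover have "4 * (x * x + y * y + 1) = (2*x) * (2*x) + (2*y) * (2*y) + 4" by (simp add: algebra_simps)
  ultimately have "int N * m < int N * int N" unfolding xy(5) by linarith
  then have "m < int N" using assms(2) by (simp add: mult_less_cancel_left)
  then show ?thesis using m_pos xy(5) by (intro exI[of _ x] exI[of _ y] exI[of _ "nat m"]) auto
qed

theorem nat_sum_of_four_squares: "0 < N \<Longrightarrow> sum_of_four_squares (of_nat N :: rat)"
proof (induction N rule: less_induct)
  case (less N)
  consider "N = 1" | "N = 2" | "\<not> prime N" "N > 2" | "prime N" "N > 2" using less.prems by linarith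
  then show ?case
  proof cases
    case 1
    then show ?thesis unfolding sum_of_four_squares_def by (intro exI[of _ 1] exI[of _ 0]) simp
  next
    case 2
    then show ?thesis unfolding sum_of_four_squares_def by (intro exI[of _ 1] exI[of _ 1] exI[of _ 0]) simp
  next
    case 3
    then obtain a where a: "a dvd N" "a \<noteq> 1" "a \<noteq> N" unfolding prime_nat_iff by auto
    then obtain b where b: "N = a * b" by (auto elim: dvdE)
    have "0 < a" "0 < b" using b less.prems by auto
    have "a < N" using a less.prems by (metis dvd_imp_le le_neq_implies_less)
    moreover have "b < N" using a(2) b \<open>0 < a\<close> \<open>0 < b\<close> by (metis less_one linorder_neqE_nat
        mult_less_cancel2 nat_mult_1 not_less_zero)
    ultimately have "sum_of_four_squares (of_nat a :: rat)" "sum_of_four_squares (of_nat b :: rat)"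
      using less.IH \<open>0 < a\<close> \<open>0 < b\<close> by auto
    from sum_of_four_squares_mult[OF this] show ?thesis unfolding b by simp
  next
    case 4
    from prime_multiple_of_two_squares_plus_one[OF this] obtain x y m
      where m: "0 < m" "m < N" "x * x + y * y + 1 = int N * int m" by blast
    then have "sum_of_four_squares (of_nat m :: rat)" using less.IH by blast
    then show ?thesis using sum_of_four_squares_of_multiple m(1,3) by blast
  qed
qed

theorem rat_sum_of_four_squares:
  assumes "(a :: rat) > 0"
  shows "\<exists>x1 x2 x3 x4. a = x1*x1 + x2*x2 + x3*x3 + x4*x4"
proof -
  obtain r s where rs: "quotient_of a = (r, s)" by (cases "quotient_of a")
  have a: "a = of_int r / of_int s" and s: "s > 0"
    using quotient_of_div[OF rs] quotient_of_denom_pos[OF rs] by auto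
  have r: "r > 0" using assms a s by (simp add: zero_less_divide_iff)
  have "sum_of_four_squares (of_nat (nat (r * s)) :: rat)" by (rule nat_sum_of_four_squares) (use r s in simp)
  then have "sum_of_four_squares (of_int r * of_int s :: rat)" using r s by simp
  from sum_of_four_squares_divide_square[OF this, of "of_int s"]
  have "sum_of_four_squares (of_int r * of_int s / (of_int s * of_int s) :: rat)" .
  moreover have "of_int r * of_int s / (of_int s * of_int s) = a" unfolding a using s by simp
  ultimately show ?thesis unfolding sum_of_four_squares_def by simp
qed

section \<open>Four copies of a rank-one form\<close>

definition quaternion_mat :: "'a :: comm_ring_1 \<Rightarrow> 'a \<Rightarrow> 'a \<Rightarrow> 'a \<Rightarrow> 'a mat" where
  "quaternion_mat x1 x2 x3 x4 = mat 4 4 (\<lambda>(i,j).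
     [[x1, -x2, -x3, -x4], [x2, x1, -x4, x3], [x3, x4, x1, -x2], [x4, -x3, x2, x1]] ! i ! j)"

lemma quaternion_congruence:
  assumes "a = x1*x1 + x2*x2 + x3*x3 + x4*x4"
  shows "transpose_mat (quaternion_mat x1 x2 x3 x4) * diag_of_list [e, e, e, e] * quaternion_mat x1 x2 x3 x4
    = diag_of_list [e * a, e * a, e * a, e * a :: 'a :: comm_ring_1]"
proof (rule eq_matI)
  let ?P = "quaternion_mat x1 x2 x3 x4"
  have P: "?P \<in> carrier_mat 4 4" unfolding quaternion_mat_def by simp
  have D: "diag_of_list [e, e, e, e] \<in> carrier_mat 4 4" using carrier_diag_of_list[of "[e, e, e, e]"]
    by (simp add: numeral_eq_Suc)
  have less4: "(i :: nat) < 4 \<longleftrightarrow> i = 0 \<or> i = 1 \<or> i = 2 \<or> i = 3" for i by auto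
  fix i j assume "i < dim_row (diag_of_list [e * a, e * a, e * a, e * a])"
    "j < dim_col (diag_of_list [e * a, e * a, e * a, e * a])"
  then have i: "i < 4" and j: "j < 4" by auto
  \<comment> \<open>The columns of \<open>?P\<close> are orthogonal of squared length \<open>a\<close> (left multiplication by a quaternion).\<close>
  have "(transpose_mat ?P * diag_of_list [e, e, e, e] * ?P) $$ (i,j) = col ?P i \<bullet> (diag_of_list [e, e, e, e] *\<^sub>v col ?P j)"
    by (rule index_congruence[OF P D i j])
  also have "\<dots> = ?P $$ (0,i) * (e * ?P $$ (0,j)) + ?P $$ (1,i) * (e * ?P $$ (1,j))
      + ?P $$ (2,i) * (e * ?P $$ (2,j)) + ?P $$ (3,i) * (e * ?P $$ (3,j))"
    using i j P by (simp add: scalar_prod_def atLeast0LessThan diag_of_list_mult_vec_index numeral_eq_Suc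
        del: index_mult_mat_vec)
  also have "\<dots> = diag_of_list [e * a, e * a, e * a, e * a] $$ (i,j)"
    using i j unfolding less4 quaternion_mat_def assms by (auto simp: algebra_simps)
  finally show "(transpose_mat ?P * diag_of_list [e, e, e, e] * ?P) $$ (i,j)
      = diag_of_list [e * a, e * a, e * a, e * a] $$ (i,j)" .
qed (auto simp: quaternion_mat_def)

lemma congruent_four_copies_sgn:
  assumes "(d :: rat) \<noteq> 0"
  shows "congruent_mat (diag_of_list [d, d, d, d]) (diag_of_list (replicate 4 (sgn d)))"
proof -
  from rat_sum_of_four_squares[of "\<bar>d\<bar>"] assms obtain x1 x2 x3 x4
    where a: "\<bar>d\<bar> = x1*x1 + x2*x2 + x3*x3 + x4*x4" by auto
  have "transpose_mat (quaternion_mat x1 x2 x3 x4) * diag_of_list [sgn d, sgn d, sgn d, sgn d] * quaternion_mat x1 x2 x3 x4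
      = diag_of_list [d, d, d, d]"
    using quaternion_congruence[OF a, of "sgn d"] by (simp add: sgn_mult_abs)
  moreover have "diag_of_list [sgn d, sgn d, sgn d, sgn d] \<in> carrier_mat 4 4"
    using carrier_diag_of_list[of "[sgn d, sgn d, sgn d, sgn d]"] by (simp add: numeral_eq_Suc)
  moreover have "quaternion_mat x1 x2 x3 x4 \<in> carrier_mat 4 4" by (simp add: quaternion_mat_def)
  moreover have "det (diag_of_list [d, d, d, d]) \<noteq> 0" using assms by (simp add: det_diag_of_list)
  ultimately have "congruent_mat (diag_of_list [sgn d, sgn d, sgn d, sgn d]) (diag_of_list [d, d, d, d])"
    by (intro congruent_matI)
  from congruent_mat_sym[OF this] show ?thesis by (simp add: numeral_eq_Suc)
qed

lemma four_copies_congruent_units: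
  assumes cong: "congruent_mat A (diag_of_list ds)" and nz: "0 \<notin> set ds"
  shows "congruent_mat (orth_sum (orth_sum A A) (orth_sum A A))
    (diag_of_list (replicate (4 * num_pos ds) 1 @ replicate (4 * num_neg ds) (-1)))"
proof -
  let ?quad = "\<lambda>ds. concat (map (\<lambda>d. [d, d, d, d]) ds)"
  let ?sgns = "\<lambda>ds. concat (map (\<lambda>d. replicate 4 (sgn d)) ds)"
  have "congruent_mat (orth_sum (orth_sum A A) (orth_sum A A)) (diag_of_list ((ds @ ds) @ (ds @ ds)))"
    unfolding orth_sum_eq_block_diag block_diag_diag_of_list[symmetric]
    by (intro congruent_mat_block_diag cong)
  also have "congruent_mat \<dots> (diag_of_list (?quad ds))"
    by (rule congruent_mat_diag_of_list_perm) (induction ds; simp add: add_ac)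
  also have "congruent_mat \<dots> (diag_of_list (?sgns ds))"
    using nz
  proof (induction ds)
    case Nil
    show ?case using congruent_mat_refl[OF carrier_diag_of_list, of "[]"] by simp
  next
    case (Cons d ds)
    then show ?case
      using congruent_mat_block_diag[OF congruent_four_copies_sgn Cons.IH]
      by (simp add: block_diag_diag_of_list)
  qed
  also have "congruent_mat \<dots> (diag_of_list (replicate (4 * num_pos ds) 1 @ replicate (4 * num_neg ds) (-1)))"
    using nz
    by (intro congruent_mat_diag_of_list_perm, induction ds)
      (auto simp: num_pos_def num_neg_def sgn_if numeral_eq_Suc)
  finally show ?thesis .
qed

section \<open>Hyperbolic planes and the Witt rank\<close>

definition hyperbolic_diag :: "nat \<Rightarrow> rat list" where
  "hyperbolic_diag k = concat (replicate k [1, -1])"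

lemma hyperbolic_diag_Suc: "hyperbolic_diag (Suc k) = hyperbolic_diag k @ [1, -1]"
  unfolding hyperbolic_diag_def by (simp add: replicate_append_same[symmetric])

lemma num_pos_hyperbolic_diag[simp]: "num_pos (hyperbolic_diag k) = k"
  by (induction k) (auto simp: hyperbolic_diag_Suc, auto simp: num_pos_def hyperbolic_diag_def)

lemma num_neg_hyperbolic_diag[simp]: "num_neg (hyperbolic_diag k) = k"
  by (induction k) (auto simp: hyperbolic_diag_Suc, auto simp: num_neg_def hyperbolic_diag_def)

lemma mset_hyperbolic_diag: "mset (hyperbolic_diag k) = replicate_mset k 1 + replicate_mset k (-1)"
  by (induction k) (auto simp: hyperbolic_diag_Suc, auto simp: hyperbolic_diag_def)

lemma carrier_hyp[simp]: "hyp k \<in> carrier_mat (2 * k) (2 * k)"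
  unfolding hyp_def by simp

lemma hyp_Suc: "hyp (Suc k) = block_diag (hyp k) (hyp 1)"
proof (rule eq_matI)
  fix i j assume "i < dim_row (block_diag (hyp k) (hyp 1))" "j < dim_col (block_diag (hyp k) (hyp 1))"
  then have "i < 2 * k + 2" "j < 2 * k + 2" unfolding block_diag_def hyp_def by auto
  then show "hyp (Suc k) $$ (i,j) = block_diag (hyp k) (hyp 1) $$ (i,j)"
    unfolding block_diag_def hyp_def by (auto simp: index_mat_four_block, presburger+)
qed (auto simp: block_diag_def hyp_def)

lemma hyp_one_congruent: "congruent_mat (hyp 1) (diag_of_list [1, -1])"
proof -
  define P where "P = mat 2 2 (\<lambda>(i,j). if i = 0 then 1 else if j = 0 then 1/2 else (-1/2 :: rat))"
  have P: "P \<in> carrier_mat 2 2" unfolding P_def by simp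
  have H: "hyp 1 \<in> carrier_mat 2 2" using carrier_hyp[of 1] by simp
  have "transpose_mat P * hyp 1 * P = diag_of_list [1, -1]"
  proof (rule eq_matI)
    fix i j assume "i < dim_row (diag_of_list [1, -1 :: rat])" "j < dim_col (diag_of_list [1, -1 :: rat])"
    then have i: "i < 2" and j: "j < 2" by auto
    have "(transpose_mat P * hyp 1 * P) $$ (i,j) = (\<Sum>l<2. P $$ (l,i) * (\<Sum>k<2. hyp 1 $$ (l,k) * P $$ (k,j)))"
      using i j P H by (simp add: scalar_prod_def atLeast0LessThan)
    also have "\<dots> = diag_of_list [1, -1] $$ (i,j)"
      using i j unfolding P_def hyp_def by (auto simp: less_2_cases_iff numeral_2_eq_2)
    finally show "(transpose_mat P * hyp 1 * P) $$ (i,j) = diag_of_list [1, -1] $$ (i,j)" .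
  qed (use P in auto)
  then show ?thesis by (rule congruent_matI[OF H P]) (simp add: det_diag_of_list)
qed

lemma hyp_congruent_hyperbolic_diag: "congruent_mat (hyp k) (diag_of_list (hyperbolic_diag k))"
proof (induction k)
  case 0
  have "hyp 0 = diag_of_list (hyperbolic_diag 0)" by (rule eq_matI) (auto simp: hyp_def hyperbolic_diag_def)
  then show ?case using congruent_mat_refl[OF carrier_hyp[of 0]] by simp
next
  case (Suc k)
  show ?case unfolding hyp_Suc hyperbolic_diag_Suc block_diag_diag_of_list[symmetric]
    by (rule congruent_mat_block_diag[OF Suc hyp_one_congruent])
qed

lemma witt_equiv_reduced_units:
  assumes F: "congruent_mat F (diag_of_list (replicate a 1 @ replicate b (-1)))"
  shows "witt_equiv (diag_of_list (replicate (a - b) 1 @ replicate (b - a) (-1))) F"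
proof -
  let ?C = "diag_of_list (replicate (a - b) 1 @ replicate (b - a) (-1))"
  let ?k = "min a b"
  \<comment> \<open>Cancel \<open>min a b\<close> pairs \<open>\<langle>1, -1\<rangle>\<close> into hyperbolic planes.\<close>
  have "mset (replicate a 1 @ replicate b (-1))
      = mset ((replicate (a - b) 1 @ replicate (b - a) (-1)) @ hyperbolic_diag ?k)"
    by (auto simp: mset_hyperbolic_diag multiset_eq_iff)
  then have "congruent_mat F (block_diag ?C (diag_of_list (hyperbolic_diag ?k)))"
    using F congruent_mat_diag_of_list_perm congruent_mat_trans
    unfolding block_diag_diag_of_list by blast
  also have "congruent_mat \<dots> (block_diag ?C (hyp ?k))"
    by (intro congruent_mat_block_diag congruent_mat_refl[OF carrier_diag_of_list]
        congruent_mat_sym[OF hyp_congruent_hyperbolic_diag])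
  finally have "isometric (orth_sum ?C (hyp ?k)) F"
    unfolding isometric_eq_congruent_mat orth_sum_eq_block_diag by (rule congruent_mat_sym)
  moreover obtain n where "F \<in> carrier_mat n n" using F unfolding congruent_mat_def by auto
  then have "orth_sum F (hyp 0) = F"
    unfolding orth_sum_eq_block_diag using carrier_hyp[of 0] by (intro block_diag_empty_right) auto
  ultimately show ?thesis unfolding witt_equiv_def by metis
qed

lemma witt_equiv_dim_lower_bound:
  assumes B: "B \<in> carrier_mat n n" "nonsing_sym B" and equiv: "witt_equiv B F"
    and F: "congruent_mat F (diag_of_list E)"
  shows "\<bar>int (num_pos E) - int (num_neg E)\<bar> \<le> int n"
proof -
  from equiv obtain k l where "congruent_mat (block_diag B (hyp k)) (block_diag F (hyp l))"
    unfolding witt_equiv_def isometric_eq_congruent_mat orth_sum_eq_block_diag by auto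
  moreover from nonsing_sym_congruent_diag[OF B(2)] obtain bs
    where bs: "length bs = n" "congruent_mat B (diag_of_list bs)" using B(1) by auto
  have "congruent_mat (block_diag B (hyp k)) (diag_of_list (bs @ hyperbolic_diag k))"
    unfolding block_diag_diag_of_list[symmetric]
    by (rule congruent_mat_block_diag[OF bs(2) hyp_congruent_hyperbolic_diag])
  moreover have "congruent_mat (block_diag F (hyp l)) (diag_of_list (E @ hyperbolic_diag l))"
    unfolding block_diag_diag_of_list[symmetric]
    by (rule congruent_mat_block_diag[OF F hyp_congruent_hyperbolic_diag])
  ultimately have "congruent_mat (diag_of_list (bs @ hyperbolic_diag k)) (diag_of_list (E @ hyperbolic_diag l))"
    by (meson congruent_mat_sym congruent_mat_trans)
  from sylvester_law_of_inertia[OF this]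
  have "num_pos bs + k = num_pos E + l" "num_neg bs + k = num_neg E + l" by simp_all
  moreover have "num_pos bs + num_neg bs \<le> n" using num_pos_plus_num_neg_le[of bs] bs(1) by simp
  ultimately show ?thesis by linarith
qed

theorem witt_rank_units:
  assumes "congruent_mat F (diag_of_list (replicate a 1 @ replicate b (-1)))"
  shows "int (witt_rank F) = \<bar>int a - int b\<bar>"
proof -
  let ?C = "diag_of_list (replicate (a - b) 1 @ replicate (b - a) (-(1 :: rat)))"
  have len: "length (replicate (a - b) 1 @ replicate (b - a) (-(1 :: rat))) = a - b + (b - a)" by simp
  have C: "?C \<in> carrier_mat (a - b + (b - a)) (a - b + (b - a))"
    using carrier_diag_of_list[of "replicate (a - b) 1 @ replicate (b - a) (-(1 :: rat))"] unfolding len .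
  moreover have "nonsing_sym ?C" unfolding nonsing_sym_def using C by (simp add: det_diag_of_list)
  ultimately have "\<exists>B. B \<in> carrier_mat (a - b + (b - a)) (a - b + (b - a)) \<and> nonsing_sym B \<and> witt_equiv B F"
    using witt_equiv_reduced_units[OF assms] by (intro exI[of _ ?C]) simp
  moreover have "a - b + (b - a) \<le> n"
    if "\<exists>B. B \<in> carrier_mat n n \<and> nonsing_sym B \<and> witt_equiv B F" for n
  proof -
    from that obtain B where "B \<in> carrier_mat n n" "nonsing_sym B" "witt_equiv B F" by blast
    from witt_equiv_dim_lower_bound[OF this assms]
    have "\<bar>int a - int b\<bar> \<le> int n" by (simp add: num_pos_def num_neg_def)
    then show ?thesis by arith
  qed
  ultimately have "witt_rank F = a - b + (b - a)" unfolding witt_rank_def by (rule Least_equality)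
  then show ?thesis by simp
qed

theorem mainTheorem1:
  fixes A :: "rat mat"
  assumes "nonsing_sym A"
  shows "int (witt_rank (orth_sum (orth_sum A A) (orth_sum A A))) = 4 * \<bar>signature A\<bar>"
proof -
  from nonsing_sym_congruent_diag[OF assms] obtain ds
    where ds: "congruent_mat A (diag_of_list ds)" "0 \<notin> set ds" by auto
  have "A \<in> carrier_mat (dim_row A) (dim_row A)" "transpose_mat A = A"
    using assms unfolding nonsing_sym_def by auto
  from signature_eq_inertia[OF this ds(1)]
  have "signature A = int (num_pos ds) - int (num_neg ds)" .
  moreover have "int (witt_rank (orth_sum (orth_sum A A) (orth_sum A A)))
      = \<bar>int (4 * num_pos ds) - int (4 * num_neg ds)\<bar>"
    by (rule witt_rank_units[OF four_copies_congruent_units[OF ds]])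
  ultimately show ?thesis by (simp add: abs_if)
qed

end
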